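(* Let $\mathscr{K}$ be a finite simplicial complex and let $f,g:\mathscr{K}\to\mathbb{R}$ be piecewise linear functions inducing filtrations on $\mathscr{K}$. Let $\mathrm{EDg}_1$ and $\mathrm{EDg}_2$ be the extended persistence diagrams of $f$ and $g$, respectively, and let $\lambda(\mathcal{G}_1)$ and $\lambda(\mathcal{G}_2)$ be their extended persistence landscapes. Then $$\Lambda_\infty(\mathrm{EDg}_1,\mathrm{EDg}_2)\;\le\; d_B(\mathrm{EDg}_1,\mathrm{EDg}_2)\;\le\;\lVert f-g\rVert_\infty ,$$ where $\Lambda_\infty(\mathrm{EDg}_1,\mathrm{EDg}_2)=\lVert \lambda(\mathcal{G}_1)-\lambda(\mathcal{G}_2)\rVert_\infty$ is the $\infty$-landscape distance and $d_B$ is the bottleneck distance.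
   Context: Extended persistence: for a function $f$ on $\mathscr{K}$ one considers the sublevel-set filtration ($f^{-1}(-\infty,\alpha]$, increasing $\alpha$) followed by the superlevel-set filtration ($f^{-1}[\alpha,\infty)$, decreasing $\alpha$, taken in relative homology). The extended persistence diagram $\mathrm{EDg}$ is the finite multiset of points $(b_i,d_i)\in\mathbb{R}^2$ recording the filtration values at which each topological feature is born ($b_i$) and dies ($d_i$) in this extended filtration; all points have finite coordinates, and it may happen that $d_i<b_i$. Decompose $\mathrm{EDg}=\mathrm{EDg}^+\cup\mathrm{EDg}^-$, where $\mathrm{EDg}^+$ contains the points with $b_i<d_i$ and $\mathrm{EDg}^-$ those with $d_i<b_i$. For each $(b_i,d_i)\in\mathrm{EDg}$, the generating function $\Lambda_i:\mathbb{R}\to\mathbb{R}$ is the piecewise linear function consisting of the two line segments from $(b_i,0)$ and from $(d_i,0)$ to the common point $\big(\tfrac{b_i+d_i}{2},\tfrac{d_i-b_i}{2}\big)$, and equal to $0$ outside the interval between $b_i$ and $d_i$ (so it is nonnegative for points of $\mathrm{EDg}^+$ and nonpositive for points of $\mathrm{EDg}^-$). The extended persistence landscape of $\mathrm{EDg}$ is $\lambda(\mathcal{G})=\{\lambda_k(\mathcal{G})\}_{k\ge1}\cup\{\lambda_{-j}(\mathcal{G})\}_{j\ge1}$, where $\lambda_k(\mathcal{G})(t)$ is the $k$-th largest value of $\{\Lambda_i(t):(b_i,d_i)\in\mathrm{EDg}^+\}$ and $\lambda_{-j}(\mathcal{G})(t)$ is the $j$-th smallest value of $\{\Lambda_i(t):(b_i,d_i)\in\mathrm{EDg}^-\}$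 (taken to be $0$ when there are fewer than $k$, resp. $j$, such values). For $1\le p\le\infty$, the $p$-landscape distance between two diagrams is $\Lambda_p(\mathrm{EDg}_1,\mathrm{EDg}_2)=\lVert\lambda(\mathcal{G}_1)-\lambda(\mathcal{G}_2)\rVert_p$, the $\ell_p$-norm of the difference of the landscape families (for $p=\infty$, the supremum over all indices and all $t\in\mathbb{R}$ of the absolute difference of corresponding landscape functions). The bottleneck distance $d_B$ is the infimum over partial matchings between the diagrams (unmatched points matched to the diagonal) of the largest $\ell_\infty$-displacement of a matched point. *)

theory Defs
  imports Complex_Main "HOL-Library.Multiset"
begin

definition simplicial_complex :: "'v set set \<Rightarrow> bool" where
  "simplicial_complex K \<longleftrightarrow> finite K \<and> (\<forall>\<sigma>\<in>K. \<sigma> \<noteq> {} \<and> finite \<sigma>) \<and>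
     (\<forall>\<sigma>\<in>K. \<forall>\<tau>. \<tau> \<subseteq> \<sigma> \<and> \<tau> \<noteq> {} \<longrightarrow> \<tau> \<in> K)"

text \<open>A chain over GF(2) is a finite set of simplices; addition is symmetric difference.\<close>

definition sdiff :: "'a set \<Rightarrow> 'a set \<Rightarrow> 'a set" where
  "sdiff a b = (a - b) \<union> (b - a)"

definition simps :: "'v set set \<Rightarrow> nat \<Rightarrow> 'v set set" where
  "simps A p = {\<sigma> \<in> A. card \<sigma> = Suc p}"

definition chains :: "'v set set \<Rightarrow> nat \<Rightarrow> 'v set set set" where
  "chains A p = Pow (simps A p)"

definition boundary :: "'v set set \<Rightarrow> 'v set set" where
  "boundary c = {\<tau>. \<tau> \<noteq> {} \<and> odd (card {\<sigma> \<in> c. \<tau> \<subseteq> \<sigma> \<and> card \<sigma> = Suc (card \<tau>)})}"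

definition ssum :: "'a set set \<Rightarrow> 'a set set \<Rightarrow> 'a set set" where
  "ssum U W = {sdiff u w | u w. u \<in> U \<and> w \<in> W}"

definition relcycles :: "'v set set \<Rightarrow> 'v set set \<Rightarrow> nat \<Rightarrow> 'v set set set" where
  "relcycles A B p = {c \<in> chains A p. boundary c \<subseteq> B}"

text \<open>Chains that are zero in H_p(A',B'): C_p(B') + boundary of C_{p+1}(A').\<close>
definition nullchains :: "'v set set \<Rightarrow> 'v set set \<Rightarrow> nat \<Rightarrow> 'v set set set" where
  "nullchains A' B' p = ssum (chains B' p) (boundary ` chains A' (Suc p))"

definition gf2dim :: "'a set \<Rightarrow> nat" where
  "gf2dim S = (LEAST k. card S \<le> 2 ^ k)"

text \<open>Rank of the map H_p(A,B) \<rightarrow> H_p(A',B') induced by inclusion of pairs.\<close>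
definition hrank :: "'v set set \<Rightarrow> 'v set set \<Rightarrow> 'v set set \<Rightarrow> 'v set set \<Rightarrow> nat \<Rightarrow> nat" where
  "hrank A B A' B' p =
     gf2dim (ssum (relcycles A B p) (nullchains A' B' p)) - gf2dim (nullchains A' B' p)"

definition critvals :: "'v set set \<Rightarrow> ('v \<Rightarrow> real) \<Rightarrow> real list" where
  "critvals K f = sorted_list_of_set (f ` \<Union>K)"

text \<open>Index k = 0: empty; k = 1..n: sublevel complex at the k-th critical value;
  k = n+1..2n: pair (K, superlevel complex at critical value number 2n+1-k).\<close>
definition ext_space :: "'v set set \<Rightarrow> ('v \<Rightarrow> real) \<Rightarrow> nat \<Rightarrow> 'v set set \<times> 'v set set" where
  "ext_space K f k = (let cs = critvals K f; n = length cs in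
     if k = 0 then ({}, {})
     else if k \<le> n then ({\<sigma> \<in> K. \<forall>v\<in>\<sigma>. f v \<le> cs ! (k - 1)}, {})
     else (K, {\<sigma> \<in> K. \<forall>v\<in>\<sigma>. cs ! (2 * n - k) \<le> f v}))"

definition ext_val :: "'v set set \<Rightarrow> ('v \<Rightarrow> real) \<Rightarrow> nat \<Rightarrow> real" where
  "ext_val K f k = (let cs = critvals K f; n = length cs in
     if k \<le> n then cs ! (k - 1) else cs ! (2 * n - k))"

definition ext_rank :: "'v set set \<Rightarrow> ('v \<Rightarrow> real) \<Rightarrow> nat \<Rightarrow> nat \<Rightarrow> nat \<Rightarrow> int" where
  "ext_rank K f p a b = int (hrank (fst (ext_space K f a)) (snd (ext_space K f a))
                                  (fst (ext_space K f b)) (snd (ext_space K f b)) p)"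

text \<open>Multiplicity of the interval of indices [k, j-1] (born at k, dies at j).\<close>
definition ext_mult :: "'v set set \<Rightarrow> ('v \<Rightarrow> real) \<Rightarrow> nat \<Rightarrow> nat \<Rightarrow> nat \<Rightarrow> int" where
  "ext_mult K f p k j = ext_rank K f p k (j - 1) - ext_rank K f p (k - 1) (j - 1)
                        - ext_rank K f p k j + ext_rank K f p (k - 1) j"

definition EDg :: "'v set set \<Rightarrow> ('v \<Rightarrow> real) \<Rightarrow> nat \<Rightarrow> (real \<times> real) multiset" where
  "EDg K f p = (let n = length (critvals K f) in
     (\<Sum>k\<in>{1..2*n}. \<Sum>j\<in>{k<..2*n}.
        if ext_val K f k \<noteq> ext_val K f j
        then replicate_mset (nat (ext_mult K f p k j)) (ext_val K f k, ext_val K f j)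
        else {#}))"

definition tent :: "real \<times> real \<Rightarrow> real \<Rightarrow> real" where
  "tent bd t = (case bd of (b, d) \<Rightarrow>
     if b \<le> d then max 0 (min (t - b) (d - t)) else - max 0 (min (t - d) (b - t)))"

definition land_pos :: "(real \<times> real) multiset \<Rightarrow> nat \<Rightarrow> real \<Rightarrow> real" where
  "land_pos D k t = (let xs = rev (sorted_list_of_multiset
       (image_mset (\<lambda>q. tent q t) (filter_mset (\<lambda>(b, d). b < d) D)))
     in if 1 \<le> k \<and> k \<le> length xs then xs ! (k - 1) else 0)"

definition land_neg :: "(real \<times> real) multiset \<Rightarrow> nat \<Rightarrow> real \<Rightarrow> real" where
  "land_neg D j t = (let xs = sorted_list_of_multiset
       (image_mset (\<lambda>q. tent q t) (filter_mset (\<lambda>(b, d). d < b) D))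
     in if 1 \<le> j \<and> j \<le> length xs then xs ! (j - 1) else 0)"

definition landscape_dist_inf :: "(real \<times> real) multiset \<Rightarrow> (real \<times> real) multiset \<Rightarrow> real" where
  "landscape_dist_inf D1 D2 =
     Sup ({\<bar>land_pos D1 k t - land_pos D2 k t\<bar> | k t. 1 \<le> k} \<union>
          {\<bar>land_neg D1 j t - land_neg D2 j t\<bar> | j t. 1 \<le> j})"

definition linf_dist :: "real \<times> real \<Rightarrow> real \<times> real \<Rightarrow> real" where
  "linf_dist x y = max \<bar>fst x - fst y\<bar> \<bar>snd x - snd y\<bar>"

definition diag_dist :: "real \<times> real \<Rightarrow> real" where
  "diag_dist x = \<bar>snd x - fst x\<bar> / 2"

definition is_partial_matching ::
  "(real \<times> real) multiset \<Rightarrow> (real \<times> real) multiset \<Rightarrow> ((real \<times> real) \<times> (real \<times> real)) multiset \<Rightarrow> bool" where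
  "is_partial_matching D1 D2 M \<longleftrightarrow> image_mset fst M \<subseteq># D1 \<and> image_mset snd M \<subseteq># D2"

definition matching_cost ::
  "(real \<times> real) multiset \<Rightarrow> (real \<times> real) multiset \<Rightarrow> ((real \<times> real) \<times> (real \<times> real)) multiset \<Rightarrow> real" where
  "matching_cost D1 D2 M = Max (insert 0
     ((\<lambda>(x, y). linf_dist x y) ` set_mset M \<union>
      diag_dist ` set_mset (D1 - image_mset fst M) \<union>
      diag_dist ` set_mset (D2 - image_mset snd M)))"

definition bottleneck :: "(real \<times> real) multiset \<Rightarrow> (real \<times> real) multiset \<Rightarrow> real" where
  "bottleneck D1 D2 = Inf {matching_cost D1 D2 M | M. is_partial_matching D1 D2 M}"

end

theory Submission
  imports Defs
begin

text \<open>
  Stability is proved along the straight homotopy \<open>h\<^sub>t = f + t (g - f)\<close>. If \<open>g\<close> is weakly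
  monotone in \<open>f\<close> on the vertices, every stage of the extended filtration of \<open>g\<close> is a stage of
  that of \<open>f\<close>; since interval multiplicities are nonnegative (a dimension count over GF(2)), the
  diagram of \<open>g\<close> is then the image of the diagram of \<open>f\<close> under the induced monotone map of
  values, and matching each point with its image costs at most \<open>max |f - g|\<close>. The finitely many
  times at which two vertex values of \<open>h\<^sub>t\<close> cross cut \<open>[0, 1]\<close> into intervals, and the two ends
  of such an interval both coarsen the order at its midpoint; composing the matchings gives
  \<open>d\<^sub>B \<le> max |f - g|\<close>.

  For the landscapes, a matching of cost \<open>c\<close> moves each tent by at most \<open>c\<close>, so at least as
  many tents of one diagram exceed \<open>a - c\<close> as tents of the other exceed \<open>a\<close>; this bounds the
  difference of the \<open>k\<close>-th largest values. The negative landscapes are the negated positive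
  landscapes of the diagrams reflected in the diagonal.
\<close>

section \<open>Subspaces of the GF(2)-vector space of finite sets\<close>

definition gf2_subspace :: "'a set set \<Rightarrow> bool" where
  "gf2_subspace S \<longleftrightarrow> finite S \<and> (\<forall>x\<in>S. finite x) \<and> {} \<in> S \<and> (\<forall>x\<in>S. \<forall>y\<in>S. sdiff x y \<in> S)"

lemma sdiff_empty [simp]: "sdiff x {} = x" "sdiff {} x = x"
  and sdiff_cancel_left [simp]: "sdiff x (sdiff x y) = y"
  by (auto simp: sdiff_def)

lemma sdiff_left_inj: "sdiff s x = sdiff s y \<Longrightarrow> x = y"
  by (metis sdiff_cancel_left)

lemma mem_sdiff_iff: "a \<in> sdiff x y \<longleftrightarrow> (a \<in> x) \<noteq> (a \<in> y)"
  by (auto simp: sdiff_def)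

lemma gf2_subspace_sdiff: "gf2_subspace S \<Longrightarrow> x \<in> S \<Longrightarrow> y \<in> S \<Longrightarrow> sdiff x y \<in> S"
  and gf2_subspace_empty: "gf2_subspace S \<Longrightarrow> {} \<in> S"
  and gf2_subspace_finite: "gf2_subspace S \<Longrightarrow> finite S"
  by (auto simp: gf2_subspace_def)

lemma gf2_subspace_subset:
  assumes "gf2_subspace S" "T \<subseteq> S" "{} \<in> T" "\<And>x y. x \<in> T \<Longrightarrow> y \<in> T \<Longrightarrow> sdiff x y \<in> T"
  shows "gf2_subspace T"
  using assms unfolding gf2_subspace_def by (auto intro: finite_subset)

lemma gf2_subspace_avoiding: assumes "gf2_subspace S" shows "gf2_subspace {x\<in>S. a \<notin> x}"
  by (rule gf2_subspace_subset[OF assms])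
    (use assms in \<open>auto simp: gf2_subspace_empty gf2_subspace_sdiff mem_sdiff_iff\<close>)

text \<open>Adding \<open>s\<close> is a bijection from the elements avoiding \<open>a\<close> onto those containing it.\<close>

lemma card_gf2_subspace_eq_double_avoiding:
  assumes S: "gf2_subspace S" and s: "s \<in> S" "a \<in> s"
  shows "card S = 2 * card {x\<in>S. a \<notin> x}"
proof -
  define S0 where "S0 = {x\<in>S. a \<notin> x}"
  have "S = S0 \<union> sdiff s ` S0"
  proof (intro equalityI subsetI)
    fix x assume x: "x \<in> S"
    show "x \<in> S0 \<union> sdiff s ` S0"
    proof (cases "a \<in> x")
      case True
      then have "sdiff s x \<in> S0" using x s S by (simp add: S0_def gf2_subspace_sdiff mem_sdiff_iff)
      then show ?thesis by (metis UnI2 image_eqI sdiff_cancel_left)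
    qed (use x in \<open>auto simp: S0_def\<close>)
  qed (use s S in \<open>auto simp: S0_def intro: gf2_subspace_sdiff\<close>)
  moreover have "S0 \<inter> sdiff s ` S0 = {}"
    using s(2) by (auto simp: S0_def mem_sdiff_iff)
  moreover have "card (sdiff s ` S0) = card S0"
    by (rule card_image) (meson inj_onI sdiff_left_inj)
  moreover have "finite S0"
    using S by (auto simp: S0_def gf2_subspace_def)
  ultimately have "card S = card S0 + card S0" by (metis card_Un_disjoint finite_imageI)
  then show ?thesis by (simp add: S0_def)
qed

lemma gf2_subspace_card_power_of_two:
  assumes "finite T" "gf2_subspace S" "S \<subseteq> Pow T"
  shows "\<exists>d. card S = 2 ^ d"
  using assms
proof (induction T arbitrary: S rule: finite_induct)
  case empty
  then have "S = {{}}" by (auto simp: gf2_subspace_def)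
  then show ?case by (intro exI[of _ 0]) simp
next
  case (insert a T)
  have "{x\<in>S. a \<notin> x} \<subseteq> Pow T" using insert.prems(2) by auto
  then obtain d where d: "card {x\<in>S. a \<notin> x} = 2 ^ d"
    using insert.IH gf2_subspace_avoiding[OF insert.prems(1)] by blast
  show ?case
  proof (cases "\<exists>s\<in>S. a \<in> s")
    case True
    then show ?thesis
      using d card_gf2_subspace_eq_double_avoiding[OF insert.prems(1)] by (metis power_Suc)
  next
    case False
    then have "S = {x\<in>S. a \<notin> x}" by auto
    then show ?thesis using d by metis
  qed
qed

lemma gf2dim_eq: "card S = 2 ^ d \<Longrightarrow> gf2dim S = d"
  unfolding gf2dim_def
  by (rule Least_equality) (auto intro: power_le_imp_le_exp[rotated])

lemma card_gf2_subspace: assumes "gf2_subspace S" shows "card S = 2 ^ gf2dim S"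
proof -
  have "finite (\<Union>S)" using assms by (auto simp: gf2_subspace_def)
  then obtain d where "card S = 2 ^ d"
    using gf2_subspace_card_power_of_two[OF _ assms] by blast
  then show ?thesis by (simp add: gf2dim_eq)
qed

lemma ssum_memI: "u \<in> U \<Longrightarrow> w \<in> W \<Longrightarrow> sdiff u w \<in> ssum U W"
  unfolding ssum_def by blast

lemma ssum_memE:
  assumes "x \<in> ssum U W"
  obtains u w where "x = sdiff u w" "u \<in> U" "w \<in> W"
  using assms unfolding ssum_def by blast

lemma ssum_eq_image: "ssum U W = (\<lambda>(u, w). sdiff u w) ` (U \<times> W)"
  unfolding ssum_def by auto

lemma gf2_subspace_ssum:
  assumes "gf2_subspace U" "gf2_subspace W" shows "gf2_subspace (ssum U W)"
  unfolding gf2_subspace_def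
proof (intro conjI ballI)
  show "finite (ssum U W)"
    using assms by (simp add: ssum_eq_image gf2_subspace_finite)
  show "{} \<in> ssum U W"
    using ssum_memI[of "{}" U "{}" W] assms by (simp add: gf2_subspace_empty)
  fix x y assume "x \<in> ssum U W" "y \<in> ssum U W"
  then obtain u w u' w' where
    uw: "x = sdiff u w" "u \<in> U" "w \<in> W" "y = sdiff u' w'" "u' \<in> U" "w' \<in> W"
    by (metis ssum_memE)
  then show "finite x" using assms by (auto simp: gf2_subspace_def sdiff_def)
  have "sdiff x y = sdiff (sdiff u u') (sdiff w w')"
    unfolding uw by (auto simp: sdiff_def)
  then show "sdiff x y \<in> ssum U W"
    using assms uw by (simp add: ssum_memI gf2_subspace_sdiff)
qed

lemma gf2_subspace_Int: "gf2_subspace U \<Longrightarrow> gf2_subspace W \<Longrightarrow> gf2_subspace (U \<inter> W)"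
  unfolding gf2_subspace_def by auto

lemma ssum_upper1: "gf2_subspace W \<Longrightarrow> U \<subseteq> ssum U W"
  using ssum_memI[of _ U "{}" W] by (force simp: gf2_subspace_empty)

lemma ssum_upper2: "gf2_subspace U \<Longrightarrow> W \<subseteq> ssum U W"
  using ssum_memI[of "{}" U _ W] by (force simp: gf2_subspace_empty)

lemma ssum_least: "gf2_subspace X \<Longrightarrow> U \<subseteq> X \<Longrightarrow> W \<subseteq> X \<Longrightarrow> ssum U W \<subseteq> X"
  by (auto elim!: ssum_memE intro: gf2_subspace_sdiff)

lemma ssum_mono: "U \<subseteq> U' \<Longrightarrow> W \<subseteq> W' \<Longrightarrow> ssum U W \<subseteq> ssum U' W'"
  by (auto elim!: ssum_memE intro: ssum_memI)

lemma ssum_absorb: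
  assumes "gf2_subspace Z" "gf2_subspace N'" "gf2_subspace N" "N \<subseteq> N'"
  shows "ssum (ssum Z N) N' = ssum Z N'"
proof
  have "ssum Z N \<subseteq> ssum Z N'" "N' \<subseteq> ssum Z N'"
    using assms by (simp_all add: ssum_mono ssum_upper2)
  then show "ssum (ssum Z N) N' \<subseteq> ssum Z N'"
    by (rule ssum_least[OF gf2_subspace_ssum[OF assms(1,2)]])
  show "ssum Z N' \<subseteq> ssum (ssum Z N) N'"
    using assms(3) by (intro ssum_mono ssum_upper1) auto
qed

text \<open>Every fibre of \<open>(u, w) \<mapsto> u + w\<close> on \<open>U \<times> W\<close> is a translate of \<open>U \<inter> W\<close>.\<close>

lemma card_ssum_mult_card_Int:
  assumes U: "gf2_subspace U" and W: "gf2_subspace W"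
  shows "card (ssum U W) * card (U \<inter> W) = card U * card W"
proof -
  define \<phi> where "\<phi> = (\<lambda>(u::'a set, w). sdiff u w)"
  have fibre: "card {q \<in> U \<times> W. \<phi> q = s} = card (U \<inter> W)" if "s \<in> ssum U W" for s
  proof -
    obtain u0 w0 where uw0: "s = sdiff u0 w0" "u0 \<in> U" "w0 \<in> W"
      using \<open>s \<in> ssum U W\<close> by (rule ssum_memE)
    have "{q \<in> U \<times> W. \<phi> q = s} = (\<lambda>x. (sdiff u0 x, sdiff w0 x)) ` (U \<inter> W)"
    proof (intro equalityI subsetI)
      fix q assume "q \<in> {q \<in> U \<times> W. \<phi> q = s}"
      then obtain u w where q: "q = (u, w)" "u \<in> U" "w \<in> W" "sdiff u w = sdiff u0 w0"
        using uw0 unfolding \<phi>_def by auto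
      have eq: "sdiff u0 u = sdiff w0 w" using q(4) unfolding sdiff_def by blast
      have "sdiff u0 u \<in> U" "sdiff w0 w \<in> W"
        using q uw0 U W by (simp_all add: gf2_subspace_sdiff)
      then have "sdiff u0 u \<in> U \<inter> W" by (simp add: eq)
      moreover have "q = (sdiff u0 (sdiff u0 u), sdiff w0 (sdiff u0 u))"
        by (metis q(1) eq sdiff_cancel_left)
      ultimately show "q \<in> (\<lambda>x. (sdiff u0 x, sdiff w0 x)) ` (U \<inter> W)"
        by blast
    qed (use uw0 U W in \<open>auto simp: \<phi>_def gf2_subspace_sdiff, auto simp: sdiff_def\<close>)
    moreover have "inj_on (\<lambda>x. (sdiff u0 x, sdiff w0 x)) (U \<inter> W)"
      by (rule inj_onI) (auto dest: sdiff_left_inj)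
    ultimately show ?thesis by (simp add: card_image)
  qed
  have fin: "finite U" "finite W" "finite (ssum U W)"
    using U W gf2_subspace_ssum[OF U W] by (simp_all add: gf2_subspace_finite)
  have "card (U \<times> W) = card (\<Union>s\<in>ssum U W. {q \<in> U \<times> W. \<phi> q = s})"
    by (rule arg_cong[where f = card]) (auto simp: ssum_def \<phi>_def)
  also have "\<dots> = (\<Sum>s\<in>ssum U W. card {q \<in> U \<times> W. \<phi> q = s})"
    using fin by (intro card_UN_disjoint) auto
  also have "\<dots> = card (ssum U W) * card (U \<inter> W)"
    using fibre by simp
  finally show ?thesis by (simp add: card_cartesian_product)
qed

lemma gf2dim_ssum_Int:
  assumes "gf2_subspace U" "gf2_subspace W"
  shows "gf2dim (ssum U W) + gf2dim (U \<inter> W) = gf2dim U + gf2dim W"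
proof -
  have "(2::nat) ^ (gf2dim (ssum U W) + gf2dim (U \<inter> W)) = 2 ^ (gf2dim U + gf2dim W)"
    using card_ssum_mult_card_Int[OF assms] assms
    by (simp add: power_add gf2_subspace_ssum gf2_subspace_Int flip: card_gf2_subspace)
  then show ?thesis by simp
qed

lemma gf2dim_mono:
  assumes "gf2_subspace U" "gf2_subspace W" "U \<subseteq> W" shows "gf2dim U \<le> gf2dim W"
proof -
  have "card U \<le> card W"
    using assms by (intro card_mono) (auto simp: gf2_subspace_finite)
  then have "(2::nat) ^ gf2dim U \<le> 2 ^ gf2dim W"
    using assms by (simp flip: card_gf2_subspace)
  then show ?thesis by (rule power_le_imp_le_exp[rotated]) simp
qed

text \<open>Both increments equal \<open>dim W - dim (\<cdot> \<inter> W)\<close>, and \<open>X \<inter> W \<subseteq> Y \<inter> W\<close>.\<close>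

lemma gf2dim_ssum_increment_le:
  assumes "gf2_subspace X" "gf2_subspace Y" "gf2_subspace W" "X \<subseteq> Y"
  shows "int (gf2dim (ssum Y W)) - int (gf2dim (ssum X W)) \<le> int (gf2dim Y) - int (gf2dim X)"
  using gf2dim_ssum_Int[of Y W] gf2dim_ssum_Int[of X W]
    gf2dim_mono[of "X \<inter> W" "Y \<inter> W"] assms
  by (force simp: gf2_subspace_Int)

section \<open>Ranks of maps in relative GF(2)-homology\<close>

lemma odd_card_sdiff_iff:
  assumes "finite A" "finite B"
  shows "odd (card (sdiff A B)) \<longleftrightarrow> odd (card A) \<noteq> odd (card B)"
proof -
  have "sdiff A B = (A \<union> B) - (A \<inter> B)" "A \<inter> B \<subseteq> A \<union> B" by (auto simp: sdiff_def)
  then have "card (sdiff A B) + card (A \<inter> B) = card (A \<union> B)"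
    using assms by (simp add: card_Diff_subset card_mono)
  moreover have "card A + card B = card (A \<union> B) + card (A \<inter> B)"
    using assms by (rule card_Un_Int)
  ultimately show ?thesis by presburger
qed

lemma boundary_sdiff:
  assumes "finite c" "finite c'"
  shows "boundary (sdiff c c') = sdiff (boundary c) (boundary c')"
proof (rule set_eqI)
  fix \<tau> :: "'a set"
  define cofaces where "cofaces X = {\<sigma> \<in> X. \<tau> \<subseteq> \<sigma> \<and> card \<sigma> = Suc (card \<tau>)}" for X :: "'a set set"
  have "cofaces (sdiff c c') = sdiff (cofaces c) (cofaces c')"
    unfolding cofaces_def sdiff_def by auto
  then have "odd (card (cofaces (sdiff c c'))) \<longleftrightarrow> odd (card (cofaces c)) \<noteq> odd (card (cofaces c'))"
    using assms by (simp add: odd_card_sdiff_iff cofaces_def)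
  then show "\<tau> \<in> boundary (sdiff c c') \<longleftrightarrow> \<tau> \<in> sdiff (boundary c) (boundary c')"
    unfolding boundary_def mem_sdiff_iff cofaces_def by auto
qed

lemma boundary_empty [simp]: "boundary {} = {}"
  unfolding boundary_def by simp

lemma finite_boundary:
  assumes "finite c" "\<forall>\<sigma>\<in>c. finite \<sigma>" shows "finite (boundary c)"
proof (rule finite_subset)
  show "boundary c \<subseteq> (\<Union>\<sigma>\<in>c. Pow \<sigma>)"
  proof
    fix \<tau> assume "\<tau> \<in> boundary c"
    then have "{\<sigma> \<in> c. \<tau> \<subseteq> \<sigma> \<and> card \<sigma> = Suc (card \<tau>)} \<noteq> {}"
      unfolding boundary_def by (intro notI) simp
    then show "\<tau> \<in> (\<Union>\<sigma>\<in>c. Pow \<sigma>)" by auto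
  qed
qed (use assms in auto)

lemma chains_mono: "A \<subseteq> A' \<Longrightarrow> chains A p \<subseteq> chains A' p"
  unfolding chains_def simps_def by auto

lemma chain_simplices_finite: "c \<in> chains A p \<Longrightarrow> \<sigma> \<in> c \<Longrightarrow> finite \<sigma>"
  unfolding chains_def simps_def using card.infinite by fastforce

lemma gf2_subspace_chains: "finite A \<Longrightarrow> gf2_subspace (chains A p)"
  unfolding gf2_subspace_def chains_def simps_def
  by (auto simp: sdiff_def intro: finite_subset)

lemma gf2_subspace_relcycles:
  assumes "finite A" shows "gf2_subspace (relcycles A B p)"
proof (rule gf2_subspace_subset[OF gf2_subspace_chains[OF assms]])
  fix x y assume "x \<in> relcycles A B p" "y \<in> relcycles A B p"
  moreover have "finite x" "finite y"
    using calculation gf2_subspace_chains[OF assms]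
    by (auto simp: relcycles_def gf2_subspace_def)
  moreover have "sdiff x y \<in> chains A p"
    using calculation gf2_subspace_chains[OF assms] by (simp add: relcycles_def gf2_subspace_sdiff)
  ultimately show "sdiff x y \<in> relcycles A B p"
    by (auto simp: relcycles_def boundary_sdiff mem_sdiff_iff)
qed (auto simp: relcycles_def chains_def)

lemma gf2_subspace_boundary_image:
  assumes "finite A" shows "gf2_subspace (boundary ` chains A q)"
proof -
  have C: "gf2_subspace (chains A q)" by (rule gf2_subspace_chains[OF assms])
  then have fin: "finite c" if "c \<in> chains A q" for c
    using that by (simp add: gf2_subspace_def)
  show ?thesis
    unfolding gf2_subspace_def
  proof (intro conjI ballI)
    show "finite (boundary ` chains A q)" using C by (simp add: gf2_subspace_finite)
    show "{} \<in> boundary ` chains A q"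
      using gf2_subspace_empty[OF C] boundary_empty by (metis image_eqI)
  next
    fix x assume "x \<in> boundary ` chains A q"
    then obtain c where "x = boundary c" "c \<in> chains A q" by blast
    then show "finite x" using fin chain_simplices_finite by (metis finite_boundary)
  next
    fix x y assume "x \<in> boundary ` chains A q" "y \<in> boundary ` chains A q"
    then obtain c c' where "x = boundary c" "y = boundary c'" "c \<in> chains A q" "c' \<in> chains A q"
      by blast
    then show "sdiff x y \<in> boundary ` chains A q"
      using C fin by (metis boundary_sdiff gf2_subspace_sdiff image_eqI)
  qed
qed

lemma gf2_subspace_nullchains: "finite A' \<Longrightarrow> finite B' \<Longrightarrow> gf2_subspace (nullchains A' B' p)"
  unfolding nullchains_def
  by (intro gf2_subspace_ssum gf2_subspace_chains gf2_subspace_boundary_image)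

lemma relcycles_mono: "A \<subseteq> A' \<Longrightarrow> B \<subseteq> B' \<Longrightarrow> relcycles A B p \<subseteq> relcycles A' B' p"
  unfolding relcycles_def using chains_mono by blast

lemma nullchains_mono: "A \<subseteq> A' \<Longrightarrow> B \<subseteq> B' \<Longrightarrow> nullchains A B p \<subseteq> nullchains A' B' p"
  unfolding nullchains_def by (intro ssum_mono image_mono chains_mono)

lemma int_hrank:
  assumes "finite A" "finite A'" "finite B'"
  shows "int (hrank A B A' B' p) =
    int (gf2dim (ssum (relcycles A B p) (nullchains A' B' p))) - int (gf2dim (nullchains A' B' p))"
proof -
  have "gf2dim (nullchains A' B' p) \<le> gf2dim (ssum (relcycles A B p) (nullchains A' B' p))"
    using assms by (intro gf2dim_mono ssum_upper2 gf2_subspace_ssum gf2_subspace_nullchains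
      gf2_subspace_relcycles)
  then show ?thesis unfolding hrank_def by simp
qed

text \<open>The alternating sum is the multiplicity of a persistence interval, read off the four ranks
  around its corner. With \<open>Z\<^sub>i\<close> the relative cycles and \<open>N\<^sub>i\<close> the null chains, its
  nonnegativity is \<open>gf2dim_ssum_increment_le\<close> for \<open>Z\<^sub>0 + N\<^sub>2 \<subseteq> Z\<^sub>1 + N\<^sub>2\<close> and \<open>W = N\<^sub>3\<close>.\<close>

lemma hrank_inclusion_exclusion_nonneg:
  assumes fin: "finite A0" "finite A1" "finite A2" "finite B2" "finite A3" "finite B3"
    and sub: "A0 \<subseteq> A1" "B0 \<subseteq> B1" "A2 \<subseteq> A3" "B2 \<subseteq> B3"
  shows "0 \<le> int (hrank A1 B1 A2 B2 p) - int (hrank A0 B0 A2 B2 p)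
            - int (hrank A1 B1 A3 B3 p) + int (hrank A0 B0 A3 B3 p)"
proof -
  define Z0 Z1 N2 N3 where "Z0 = relcycles A0 B0 p" and "Z1 = relcycles A1 B1 p"
    and "N2 = nullchains A2 B2 p" and "N3 = nullchains A3 B3 p"
  have sp: "gf2_subspace Z0" "gf2_subspace Z1" "gf2_subspace N2" "gf2_subspace N3"
    unfolding Z0_def Z1_def N2_def N3_def using fin
    by (auto intro: gf2_subspace_relcycles gf2_subspace_nullchains)
  have "Z0 \<subseteq> Z1" "N2 \<subseteq> N3" unfolding Z0_def Z1_def N2_def N3_def
    using relcycles_mono[OF sub(1,2)] nullchains_mono[OF sub(3,4)] by auto
  then have "int (gf2dim (ssum (ssum Z1 N2) N3)) - int (gf2dim (ssum (ssum Z0 N2) N3))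
      \<le> int (gf2dim (ssum Z1 N2)) - int (gf2dim (ssum Z0 N2))"
    using sp by (intro gf2dim_ssum_increment_le gf2_subspace_ssum ssum_mono) auto
  moreover have "ssum (ssum Z1 N2) N3 = ssum Z1 N3" "ssum (ssum Z0 N2) N3 = ssum Z0 N3"
    using ssum_absorb sp \<open>N2 \<subseteq> N3\<close> by blast+
  ultimately show ?thesis
    using fin unfolding Z0_def Z1_def N2_def N3_def by (simp add: int_hrank)
qed

section \<open>Ranks in a finite linear order\<close>

context
  fixes S :: "'a::linorder set"
  assumes finite_S: "finite S"
begin

lemma sorted_list_of_set_nth_le_iff:
  "i < card S \<Longrightarrow> j < card S \<Longrightarrow>
    sorted_list_of_set S ! i \<le> sorted_list_of_set S ! j \<longleftrightarrow> i \<le> j"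
proof -
  assume ij: "i < card S" "j < card S"
  let ?s = "sorted_list_of_set S"
  have "?s ! i < ?s ! j" if "i < j" "j < card S" for i j
    using that sorted_wrt_nth_less[OF strict_sorted_list_of_set] by simp
  then show ?thesis using ij by (metis leD le_less linorder_le_less_linear)
qed

lemma sorted_list_of_set_nth_mem: "i < card S \<Longrightarrow> sorted_list_of_set S ! i \<in> S"
  using finite_S nth_mem[of i "sorted_list_of_set S"] by simp

lemma sorted_list_of_set_nth_exists: "y \<in> S \<Longrightarrow> \<exists>i<card S. sorted_list_of_set S ! i = y"
  using finite_S in_set_conv_nth[of y "sorted_list_of_set S"] by auto

lemma card_le_sorted_list_of_set_nth:
  assumes "i < card S" shows "card {x\<in>S. x \<le> sorted_list_of_set S ! i} = Suc i"
proof -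
  let ?s = "sorted_list_of_set S"
  have "{x\<in>S. x \<le> ?s ! i} = (!) ?s ` {0..i}"
    using assms sorted_list_of_set_nth_le_iff sorted_list_of_set_nth_mem
    by (auto dest!: sorted_list_of_set_nth_exists)
  moreover have "inj_on ((!) ?s) {0..i}"
    using assms sorted_list_of_set_nth_le_iff by (intro inj_onI) (metis atLeastAtMost_iff
      le_antisym le_less_trans order_refl)
  ultimately show ?thesis by (simp add: card_image)
qed

lemma card_ge_sorted_list_of_set_nth:
  assumes "i < card S" shows "card {x\<in>S. sorted_list_of_set S ! i \<le> x} = card S - i"
proof -
  let ?s = "sorted_list_of_set S"
  have "{x\<in>S. ?s ! i \<le> x} = (!) ?s ` {i..<card S}"
    using assms sorted_list_of_set_nth_le_iff sorted_list_of_set_nth_mem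
    by (auto dest!: sorted_list_of_set_nth_exists)
  moreover have "inj_on ((!) ?s) {i..<card S}"
    using sorted_list_of_set_nth_le_iff by (intro inj_onI) (metis atLeastLessThan_iff le_antisym
      order_refl)
  ultimately show ?thesis by (simp add: card_image)
qed

text \<open>Subsets of \<open>S\<close> closed downwards along a total relation are nested.\<close>

lemma closed_subset_if_card_le:
  assumes total: "\<And>x y. x \<in> S \<Longrightarrow> y \<in> S \<Longrightarrow> R x y \<or> R y x"
    and "A \<subseteq> S" "B \<subseteq> S"
    and A: "\<And>x y. x \<in> A \<Longrightarrow> y \<in> S \<Longrightarrow> R y x \<Longrightarrow> y \<in> A"
    and B: "\<And>x y. x \<in> B \<Longrightarrow> y \<in> S \<Longrightarrow> R y x \<Longrightarrow> y \<in> B"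
    and "card A \<le> card B"
  shows "A \<subseteq> B"
proof (rule ccontr)
  assume "\<not> A \<subseteq> B"
  then obtain a where a: "a \<in> A" "a \<notin> B" by blast
  have "B \<subseteq> A" using a total A B \<open>A \<subseteq> S\<close> \<open>B \<subseteq> S\<close> by blast
  then have "B \<subset> A" using a by blast
  then have "card B < card A" using finite_S \<open>A \<subseteq> S\<close> by (meson finite_subset psubset_card_mono)
  then show False using \<open>card A \<le> card B\<close> by simp
qed

lemma down_closed_eq_le_nth:
  assumes "A \<subseteq> S" "A \<noteq> {}" and down: "\<And>x y. x \<in> A \<Longrightarrow> y \<in> S \<Longrightarrow> y \<le> x \<Longrightarrow> y \<in> A"
  shows "A = {x\<in>S. x \<le> sorted_list_of_set S ! (card A - 1)}" (is "A = ?B")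
proof -
  have "0 < card A" "card A \<le> card S"
    using assms finite_S by (auto simp: card_gt_0_iff finite_subset card_mono)
  then have card: "card ?B = card A"
    by (simp add: card_le_sorted_list_of_set_nth)
  have "A \<subseteq> ?B" "?B \<subseteq> A"
    by (rule closed_subset_if_card_le[where R = "(\<le>)"];
        use assms(1) down card in \<open>auto intro: order_trans\<close>)+
  then show ?thesis by blast
qed

lemma up_closed_eq_ge_nth:
  assumes "A \<subseteq> S" "A \<noteq> {}" and up: "\<And>x y. x \<in> A \<Longrightarrow> y \<in> S \<Longrightarrow> x \<le> y \<Longrightarrow> y \<in> A"
  shows "A = {x\<in>S. sorted_list_of_set S ! (card S - card A) \<le> x}" (is "A = ?B")
proof -
  have "0 < card A" "card A \<le> card S"
    using assms finite_S by (auto simp: card_gt_0_iff finite_subset card_mono)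
  then have card: "card ?B = card A"
    by (simp add: card_ge_sorted_list_of_set_nth)
  have "A \<subseteq> ?B" "?B \<subseteq> A"
    by (rule closed_subset_if_card_le[where R = "\<lambda>x y. y \<le> x"];
        use assms(1) up card in \<open>auto intro: order_trans\<close>)+
  then show ?thesis by blast
qed

lemma eq_sorted_list_of_set_nth_if_above_pred:
  assumes "y \<in> S" "j < card S" "y \<le> sorted_list_of_set S ! j"
    and "j = 0 \<or> sorted_list_of_set S ! (j - 1) < y"
  shows "y = sorted_list_of_set S ! j"
proof -
  obtain i where i: "i < card S" "sorted_list_of_set S ! i = y"
    using sorted_list_of_set_nth_exists[OF assms(1)] by blast
  have "i \<le> j" using i assms(2,3) sorted_list_of_set_nth_le_iff by auto
  moreover have "\<not> i \<le> j - 1" if "j \<noteq> 0"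
  proof -
    have "j - 1 < card S" using assms(2) by linarith
    then show ?thesis using i assms(4) that sorted_list_of_set_nth_le_iff[of i "j - 1"] by auto
  qed
  ultimately have "i = j" by (cases "j = 0") auto
  with i show ?thesis by simp
qed

lemma eq_sorted_list_of_set_nth_if_below_succ:
  assumes "y \<in> S" "j < card S" "sorted_list_of_set S ! j \<le> y"
    and "Suc j = card S \<or> y < sorted_list_of_set S ! Suc j"
  shows "y = sorted_list_of_set S ! j"
proof -
  obtain i where i: "i < card S" "sorted_list_of_set S ! i = y"
    using sorted_list_of_set_nth_exists[OF assms(1)] by blast
  have "j \<le> i" using i assms(2,3) sorted_list_of_set_nth_le_iff by auto
  moreover have "\<not> Suc j \<le> i" if "Suc j \<noteq> card S"
    using i assms(2,4) that sorted_list_of_set_nth_le_iff[of "Suc j" i] by auto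
  ultimately have "i = j" using i(1) by (cases "Suc j = card S") auto
  with i show ?thesis by simp
qed

end

section \<open>Persistence diagrams of rank functions\<close>

text \<open>\<open>r k j\<close> is the rank of the map from stage \<open>k\<close> to stage \<open>j\<close> of a filtration indexed by
  \<open>0..N\<close>; \<open>rank_mult r k j\<close> counts the intervals born at stage \<open>k\<close> that die at stage \<open>j\<close>.\<close>

definition rank_mult :: "(nat \<Rightarrow> nat \<Rightarrow> int) \<Rightarrow> nat \<Rightarrow> nat \<Rightarrow> int" where
  "rank_mult r k j = r k (j - 1) - r (k - 1) (j - 1) - r k j + r (k - 1) j"

definition rank_diagram :: "nat \<Rightarrow> (nat \<Rightarrow> real) \<Rightarrow> (nat \<Rightarrow> nat \<Rightarrow> int) \<Rightarrow> (real \<times> real) multiset" where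
  "rank_diagram N v r = (\<Sum>k\<in>{1..N}. \<Sum>j\<in>{k<..N}.
     if v k \<noteq> v j then replicate_mset (nat (rank_mult r k j)) (v k, v j) else {#})"

lemma EDg_eq_rank_diagram:
  "EDg K f p = rank_diagram (2 * length (critvals K f)) (ext_val K f) (ext_rank K f p)"
  unfolding EDg_def rank_diagram_def ext_mult_def rank_mult_def Let_def ..

lemma sum_greaterThanAtMost_eq_sum_if:
  fixes k N :: nat
  assumes "k \<in> {1..N}"
  shows "(\<Sum>j\<in>{k<..N}. F j) = (\<Sum>j\<in>{1..N}. if k < j then F j else 0)"
proof -
  have "{k<..N} = {j \<in> {1..N}. k < j}" using assms by auto
  then show ?thesis by (simp only: sum.inter_filter[OF finite_atLeastAtMost])
qed

lemma rank_diagram_square: "rank_diagram N v r = (\<Sum>k\<in>{1..N}. \<Sum>j\<in>{1..N}.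
    if k < j \<and> v k \<noteq> v j then replicate_mset (nat (rank_mult r k j)) (v k, v j) else {#})"
  unfolding rank_diagram_def
  by (rule sum.cong[OF refl], subst sum_greaterThanAtMost_eq_sum_if) (auto intro: sum.cong)

lemma sum_greaterThanAtMost_telescope:
  "(a::nat) \<le> b \<Longrightarrow> (\<Sum>k\<in>{a<..b}. h k - h (k - 1)) = h b - (h a :: 'a::ab_group_add)"
proof (induction b)
  case (Suc b)
  then show ?case
    by (cases "a = Suc b") (auto simp: atLeastSucAtMost_greaterThanAtMost[symmetric]
      sum.atLeast_Suc_atMost_Suc_shift)
qed simp

lemma sum_rank_mult_block:
  assumes "a \<le> b" "c \<le> d"
  shows "(\<Sum>k\<in>{a<..b}. \<Sum>j\<in>{c<..d}. rank_mult r k j) = r b c - r a c - r b d + r a d"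
proof -
  have "(\<Sum>j\<in>{c<..d}. rank_mult r k j) = (r k c - r (k - 1) c) - (r k d - r (k - 1) d)" for k
    using sum_greaterThanAtMost_telescope[OF assms(2), of "\<lambda>j. r k j - r (k - 1) j"]
    by (simp add: rank_mult_def sum_subtractf algebra_simps)
  then show ?thesis
    using sum_greaterThanAtMost_telescope[OF assms(1), of "\<lambda>k. r k c"]
      sum_greaterThanAtMost_telescope[OF assms(1), of "\<lambda>k. r k d"]
    by (simp add: sum_subtractf)
qed

lemma sum_split_blocks:
  fixes \<tau> :: "nat \<Rightarrow> nat"
  assumes "mono \<tau>" "\<tau> 0 = 0"
  shows "(\<Sum>k\<in>{1..\<tau> M}. h k) = (\<Sum>K\<in>{1..M}. \<Sum>k\<in>{\<tau> (K - 1)<..\<tau> K}. h k)"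
proof (induction M)
  case (Suc M)
  have "\<tau> M \<le> \<tau> (Suc M)" using assms(1) by (simp add: monoD)
  then have "{1..\<tau> (Suc M)} = {1..\<tau> M} \<union> {\<tau> M<..\<tau> (Suc M)}" by auto
  then have "(\<Sum>k\<in>{1..\<tau> (Suc M)}. h k) = (\<Sum>k\<in>{1..\<tau> M}. h k) + (\<Sum>k\<in>{\<tau> M<..\<tau> (Suc M)}. h k)"
    by (simp add: sum.union_disjoint[symmetric] ivl_disj_int)
  then show ?case using Suc.IH by simp
qed (simp add: assms(2))

lemma image_mset_sum: "image_mset g (sum F A) = (\<Sum>x\<in>A. image_mset g (F x))"
  by (induction A rule: infinite_finite_induct) auto

lemma filter_mset_sum: "filter_mset P (sum F A) = (\<Sum>x\<in>A. filter_mset P (F x))"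
  by (induction A rule: infinite_finite_induct) auto

lemma mem_sum_mset: "x \<in># sum F A \<Longrightarrow> \<exists>a\<in>A. x \<in># F a"
  by (induction A rule: infinite_finite_induct) auto

lemma sum_replicate_mset: "(\<Sum>i\<in>A. replicate_mset (h i) x) = replicate_mset (\<Sum>i\<in>A. h i) x"
  by (simp add: multiset_eq_iff count_sum)

lemma filter_replicate_mset:
  "filter_mset P (replicate_mset n x) = (if P x then replicate_mset n x else {#})"
  by (simp add: multiset_eq_iff)

lemma nat_sum: "(\<And>i. i \<in> A \<Longrightarrow> 0 \<le> h i) \<Longrightarrow> nat (\<Sum>i\<in>A. h i) = (\<Sum>i\<in>A. nat (h i))"
  by (induction A rule: infinite_finite_induct) (auto simp: nat_add_distrib sum_nonneg)

text \<open>Stage \<open>K\<close> of a coarser filtration with values \<open>w\<close> is stage \<open>\<tau> K\<close> of a finer one with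
  values \<open>v\<close>; the value map \<open>\<psi>\<close> sends the values of the block of fine stages
  \<open>{\<tau> (K - 1)<..\<tau> K}\<close> to \<open>w K\<close>. The coarse diagram is then the image of the fine one under
  \<open>\<psi>\<close>, without the points that \<open>\<psi>\<close> moves onto the diagonal; this needs the multiplicities to be
  nonnegative, so that they add up over blocks.\<close>

locale diagram_reindexing =
  fixes N M :: nat and r :: "nat \<Rightarrow> nat \<Rightarrow> int" and \<tau> :: "nat \<Rightarrow> nat"
    and v w :: "nat \<Rightarrow> real" and \<psi> :: "real \<Rightarrow> real"
  assumes mono_\<tau>: "mono \<tau>" and \<tau>_0: "\<tau> 0 = 0" and \<tau>_M: "\<tau> M = N"
    and block_values: "\<And>K k. K \<in> {1..M} \<Longrightarrow> k \<in> {\<tau> (K - 1)<..\<tau> K} \<Longrightarrow> w K = \<psi> (v k)"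
    and rank_mult_nonneg: "\<And>k j. 0 \<le> rank_mult r k j"
begin

lemma less_iff_block_less:
  assumes "K \<noteq> J" "k \<in> {\<tau> (K - 1)<..\<tau> K}" "j \<in> {\<tau> (J - 1)<..\<tau> J}"
  shows "k < j \<longleftrightarrow> K < J"
proof (cases "K < J")
  case True
  then have "\<tau> K \<le> \<tau> (J - 1)" by (intro monoD[OF mono_\<tau>]) simp
  then show ?thesis using True assms(2,3) by auto
next
  case False
  then have "\<tau> J \<le> \<tau> (K - 1)" using assms(1) by (intro monoD[OF mono_\<tau>]) simp
  then show ?thesis using False assms(2,3) by auto
qed

lemma block_sum:
  assumes K: "K \<in> {1..M}" and J: "J \<in> {1..M}"
  shows "(\<Sum>k\<in>{\<tau> (K - 1)<..\<tau> K}. \<Sum>j\<in>{\<tau> (J - 1)<..\<tau> J}.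
      if k < j \<and> \<psi> (v k) \<noteq> \<psi> (v j)
      then replicate_mset (nat (rank_mult r k j)) (\<psi> (v k), \<psi> (v j)) else {#})
    = (if K < J \<and> w K \<noteq> w J
      then replicate_mset (nat (rank_mult (\<lambda>K J. r (\<tau> K) (\<tau> J)) K J)) (w K, w J) else {#})"
    (is "?lhs = ?rhs")
proof -
  let ?P = "K < J \<and> w K \<noteq> w J"
  have "?lhs = (\<Sum>k\<in>{\<tau> (K - 1)<..\<tau> K}. \<Sum>j\<in>{\<tau> (J - 1)<..\<tau> J}.
      if ?P then replicate_mset (nat (rank_mult r k j)) (w K, w J) else {#})"
  proof (intro sum.cong refl)
    fix k j assume k: "k \<in> {\<tau> (K - 1)<..\<tau> K}" and j: "j \<in> {\<tau> (J - 1)<..\<tau> J}"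
    have "\<psi> (v k) = w K" "\<psi> (v j) = w J" using block_values K J k j by auto
    moreover have "(k < j \<and> w K \<noteq> w J) \<longleftrightarrow> ?P"
      using less_iff_block_less[OF _ k j] by (cases "K = J") auto
    ultimately show "(if k < j \<and> \<psi> (v k) \<noteq> \<psi> (v j)
        then replicate_mset (nat (rank_mult r k j)) (\<psi> (v k), \<psi> (v j)) else {#})
      = (if ?P then replicate_mset (nat (rank_mult r k j)) (w K, w J) else {#})"
      by simp
  qed
  also have "\<dots> = ?rhs"
  proof (cases ?P)
    case True
    have "\<tau> (K - 1) \<le> \<tau> K" "\<tau> (J - 1) \<le> \<tau> J" by (simp_all add: monoD[OF mono_\<tau>])
    then have "(\<Sum>k\<in>{\<tau> (K - 1)<..\<tau> K}. \<Sum>j\<in>{\<tau> (J - 1)<..\<tau> J}. rank_mult r k j)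
        = rank_mult (\<lambda>K J. r (\<tau> K) (\<tau> J)) K J"
      by (simp add: sum_rank_mult_block) (simp add: rank_mult_def)
    moreover have "nat (\<Sum>k\<in>{\<tau> (K - 1)<..\<tau> K}. \<Sum>j\<in>{\<tau> (J - 1)<..\<tau> J}. rank_mult r k j)
        = (\<Sum>k\<in>{\<tau> (K - 1)<..\<tau> K}. \<Sum>j\<in>{\<tau> (J - 1)<..\<tau> J}. nat (rank_mult r k j))"
      using rank_mult_nonneg by (simp add: nat_sum sum_nonneg)
    ultimately show ?thesis using True by (simp add: sum_replicate_mset)
  next
    case False
    then show ?thesis by (simp only: if_not_P[OF False] if_False sum.neutral_const)
  qed
  finally show ?thesis .
qed

theorem rank_diagram_reindex:
  "rank_diagram M w (\<lambda>K J. r (\<tau> K) (\<tau> J))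
    = image_mset (map_prod \<psi> \<psi>) (filter_mset (\<lambda>(b, d). \<psi> b \<noteq> \<psi> d) (rank_diagram N v r))"
proof -
  define F where "F k j = (if k < j \<and> \<psi> (v k) \<noteq> \<psi> (v j)
      then replicate_mset (nat (rank_mult r k j)) (\<psi> (v k), \<psi> (v j)) else {#})" for k j
  have blocks: "(\<Sum>k\<in>{1..N}. h k) = (\<Sum>K\<in>{1..M}. \<Sum>k\<in>{\<tau> (K - 1)<..\<tau> K}. h k)"
    for h :: "nat \<Rightarrow> (real \<times> real) multiset"
    using sum_split_blocks[OF mono_\<tau> \<tau>_0] \<tau>_M by metis
  have "image_mset (map_prod \<psi> \<psi>) (filter_mset (\<lambda>(b, d). \<psi> b \<noteq> \<psi> d) (rank_diagram N v r))
      = (\<Sum>k\<in>{1..N}. \<Sum>j\<in>{1..N}. F k j)"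
    unfolding rank_diagram_square filter_mset_sum image_mset_sum F_def
    by (intro sum.cong refl) (auto simp: filter_replicate_mset)
  also have "\<dots> = (\<Sum>K\<in>{1..M}. \<Sum>k\<in>{\<tau> (K - 1)<..\<tau> K}.
      \<Sum>J\<in>{1..M}. \<Sum>j\<in>{\<tau> (J - 1)<..\<tau> J}. F k j)"
    by (simp only: blocks)
  also have "\<dots> = (\<Sum>K\<in>{1..M}. \<Sum>J\<in>{1..M}.
      \<Sum>k\<in>{\<tau> (K - 1)<..\<tau> K}. \<Sum>j\<in>{\<tau> (J - 1)<..\<tau> J}. F k j)"
    by (intro sum.cong refl sum.swap)
  also have "\<dots> = rank_diagram M w (\<lambda>K J. r (\<tau> K) (\<tau> J))"
    unfolding rank_diagram_square F_def by (intro sum.cong refl block_sum)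
  finally show ?thesis ..
qed

end

section \<open>The extended filtration\<close>

lemma simplicial_complex_finite_vertices: "simplicial_complex K \<Longrightarrow> finite (\<Union>K)"
  unfolding simplicial_complex_def by auto

lemma ext_space_subset: "fst (ext_space K f a) \<subseteq> K" "snd (ext_space K f a) \<subseteq> K"
  unfolding ext_space_def Let_def by auto

lemma ext_space_mono:
  assumes "a \<le> b"
  shows "fst (ext_space K f a) \<subseteq> fst (ext_space K f b)
    \<and> snd (ext_space K f a) \<subseteq> snd (ext_space K f b)"
proof -
  let ?cs = "critvals K f" and ?n = "length (critvals K f)"
  have sorted: "?cs ! i \<le> ?cs ! j" if "i \<le> j" "j < ?n" for i j
    using that sorted_nth_mono[of ?cs] by (simp add: critvals_def)
  consider "a = 0" | "0 < a" "b \<le> ?n" | "0 < a" "a \<le> ?n" "?n < b" | "?n < a"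
    using assms by linarith
  then show ?thesis
  proof cases
    case 4
    have "?cs ! (2 * ?n - b) \<le> ?cs ! (2 * ?n - a)"
      using assms 4 sorted[of "2 * ?n - b" "2 * ?n - a"] by (cases "2 * ?n - b = 2 * ?n - a") auto
    then show ?thesis using assms 4 unfolding ext_space_def Let_def by (auto intro: order_trans)
  qed (use assms sorted in \<open>auto simp: ext_space_def Let_def intro: order_trans\<close>)
qed

lemma rank_mult_ext_rank_nonneg:
  assumes "finite K" shows "0 \<le> rank_mult (ext_rank K f p) k j"
proof -
  have "finite (fst (ext_space K f a))" "finite (snd (ext_space K f a))" for a
    using ext_space_subset[of K f a] assms finite_subset by blast+
  then show ?thesis
    unfolding rank_mult_def ext_rank_def
    using ext_space_mono[of "k - 1" k K f] ext_space_mono[of "j - 1" j K f]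
    by (intro hrank_inclusion_exclusion_nonneg) auto
qed

lemma ext_val_mem_critvals:
  assumes "1 \<le> k" "k \<le> 2 * length (critvals K f)"
  shows "ext_val K f k \<in> set (critvals K f)"
  using assms unfolding ext_val_def Let_def by auto

lemma EDg_subset_critvals: "set_mset (EDg K f p) \<subseteq> set (critvals K f) \<times> set (critvals K f)"
proof
  fix x assume "x \<in># EDg K f p"
  then obtain k j where "k \<in> {1..2 * length (critvals K f)}" "j \<in> {k<..2 * length (critvals K f)}"
     "x \<in># (if ext_val K f k \<noteq> ext_val K f j
        then replicate_mset (nat (rank_mult (ext_rank K f p) k j)) (ext_val K f k, ext_val K f j)
        else {#})"
    unfolding EDg_eq_rank_diagram rank_diagram_def
    by (blast dest: mem_sum_mset)
  then show "x \<in> set (critvals K f) \<times> set (critvals K f)"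
    by (auto split: if_splits intro!: ext_val_mem_critvals)
qed

section \<open>Coarsening the order of the vertex values\<close>

text \<open>If \<open>g\<close> is weakly monotone in \<open>f\<close> on the vertices, every stage of the extended filtration
  of \<open>g\<close> is a stage of that of \<open>f\<close>: stage \<open>k\<close> of \<open>g\<close> is stage \<open>\<tau> k\<close> of \<open>f\<close>.\<close>

locale order_coarsening =
  fixes K :: "'v set set" and f g :: "'v \<Rightarrow> real"
  assumes simplicial_complex: "simplicial_complex K" and nonempty: "K \<noteq> {}"
    and coarsening: "\<And>u v. u \<in> \<Union>K \<Longrightarrow> v \<in> \<Union>K \<Longrightarrow> f u \<le> f v \<Longrightarrow> g u \<le> g v"
begin

abbreviation "V \<equiv> \<Union>K"
abbreviation "n \<equiv> card (f ` V)"
abbreviation "m \<equiv> card (g ` V)"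
abbreviation "cf \<equiv> sorted_list_of_set (f ` V)"
abbreviation "cg \<equiv> sorted_list_of_set (g ` V)"

lemma finite_values: "finite (f ` V)" "finite (g ` V)"
  using simplicial_complex_finite_vertices[OF simplicial_complex] by simp_all

lemma card_values_pos: "0 < n" "0 < m"
  using simplicial_complex nonempty finite_values
  by (auto simp: card_gt_0_iff simplicial_complex_def)

text \<open>Equal \<open>f\<close>-values force equal \<open>g\<close>-values, so \<open>\<psi> (f v) = g v\<close> whatever vertex is chosen.\<close>

definition \<psi> :: "real \<Rightarrow> real" where
  "\<psi> x = g (SOME v. v \<in> V \<and> f v = x)"

lemma \<psi>_f: assumes "v \<in> V" shows "\<psi> (f v) = g v"
proof -
  define u where "u = (SOME u. u \<in> V \<and> f u = f v)"
  have "u \<in> V" "f u = f v"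
    using someI_ex[of "\<lambda>u. u \<in> V \<and> f u = f v"] assms unfolding u_def by blast+
  then show ?thesis
    using coarsening[of u v] coarsening[of v u] assms unfolding \<psi>_def u_def[symmetric] by simp
qed

lemma \<psi>_mono: "x \<in> f ` V \<Longrightarrow> y \<in> f ` V \<Longrightarrow> x \<le> y \<Longrightarrow> \<psi> x \<le> \<psi> y"
  by (elim imageE) (simp add: \<psi>_f coarsening)

lemma \<psi>_image: "\<psi> ` f ` V = g ` V"
  by (force simp: \<psi>_f image_comp)

lemma \<psi>_mem: "x \<in> f ` V \<Longrightarrow> \<psi> x \<in> g ` V"
  by (metis \<psi>_image imageI)

definition lower :: "real \<Rightarrow> real set" where
  "lower c = {x \<in> f ` V. \<psi> x \<le> c}"

definition upper :: "real \<Rightarrow> real set" where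
  "upper c = {x \<in> f ` V. c \<le> \<psi> x}"

lemma lower_upper_nonempty:
  assumes "c \<in> g ` V" shows "lower c \<noteq> {}" "upper c \<noteq> {}"
proof -
  obtain x where "x \<in> f ` V" "\<psi> x = c" using assms \<psi>_image by (metis imageE)
  then have "x \<in> lower c" "x \<in> upper c" by (simp_all add: lower_def upper_def)
  then show "lower c \<noteq> {}" "upper c \<noteq> {}" by blast+
qed

lemma lower_eq:
  assumes "c \<in> g ` V" shows "lower c = {x \<in> f ` V. x \<le> cf ! (card (lower c) - 1)}"
proof (rule down_closed_eq_le_nth[OF finite_values(1)])
  fix x y assume "x \<in> lower c" "y \<in> f ` V" "y \<le> x"
  then show "y \<in> lower c" using \<psi>_mono[of y x] by (auto simp: lower_def)
qed (simp_all add: lower_upper_nonempty(1)[OF assms], auto simp: lower_def)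

lemma upper_eq:
  assumes "c \<in> g ` V" shows "upper c = {x \<in> f ` V. cf ! (n - card (upper c)) \<le> x}"
proof (rule up_closed_eq_ge_nth[OF finite_values(1)])
  fix x y assume "x \<in> upper c" "y \<in> f ` V" "x \<le> y"
  then show "y \<in> upper c" using \<psi>_mono[of x y] by (auto simp: upper_def)
qed (simp_all add: lower_upper_nonempty(2)[OF assms], auto simp: upper_def)

lemma card_lower: "c \<in> g ` V \<Longrightarrow> 0 < card (lower c) \<and> card (lower c) \<le> n"
  and card_upper: "c \<in> g ` V \<Longrightarrow> 0 < card (upper c) \<and> card (upper c) \<le> n"
proof -
  assume "c \<in> g ` V"
  moreover have "lower c \<subseteq> f ` V" "upper c \<subseteq> f ` V" by (auto simp: lower_def upper_def)
  ultimately show "0 < card (lower c) \<and> card (lower c) \<le> n"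
    "0 < card (upper c) \<and> card (upper c) \<le> n"
    using lower_upper_nonempty finite_values(1) by (meson card_gt_0_iff card_mono finite_subset)+
qed

lemma \<psi>_le_iff:
  assumes "x \<in> f ` V" "c \<in> g ` V"
  shows "\<psi> x \<le> c \<longleftrightarrow> x \<le> cf ! (card (lower c) - 1)"
  using eqset_imp_iff[OF lower_eq[OF assms(2)], of x] assms(1) by (simp add: lower_def)

lemma \<psi>_ge_iff:
  assumes "x \<in> f ` V" "c \<in> g ` V"
  shows "c \<le> \<psi> x \<longleftrightarrow> cf ! (n - card (upper c)) \<le> x"
  using eqset_imp_iff[OF upper_eq[OF assms(2)], of x] assms(1) by (simp add: upper_def)

lemma le_iff_lower: "v \<in> V \<Longrightarrow> c \<in> g ` V \<Longrightarrow> g v \<le> c \<longleftrightarrow> f v \<le> cf ! (card (lower c) - 1)"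
  using \<psi>_le_iff[of "f v" c] by (simp add: \<psi>_f)

lemma ge_iff_upper: "v \<in> V \<Longrightarrow> c \<in> g ` V \<Longrightarrow> c \<le> g v \<longleftrightarrow> cf ! (n - card (upper c)) \<le> f v"
  using \<psi>_ge_iff[of "f v" c] by (simp add: \<psi>_f)

lemma \<psi>_nth_le_iff:
  assumes "1 \<le> k" "k \<le> n" "c \<in> g ` V"
  shows "\<psi> (cf ! (k - 1)) \<le> c \<longleftrightarrow> k \<le> card (lower c)"
proof -
  have "cf ! (k - 1) \<in> f ` V"
    using assms by (simp add: sorted_list_of_set_nth_mem[OF finite_values(1)])
  then have "\<psi> (cf ! (k - 1)) \<le> c \<longleftrightarrow> cf ! (k - 1) \<le> cf ! (card (lower c) - 1)"
    using assms(3) by (rule \<psi>_le_iff)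
  also have "\<dots> \<longleftrightarrow> k \<le> card (lower c)"
    using assms card_lower[OF assms(3)]
    by (subst sorted_list_of_set_nth_le_iff[OF finite_values(1)]) auto
  finally show ?thesis .
qed

lemma \<psi>_nth_ge_iff:
  assumes "1 \<le> k" "k \<le> n" "c \<in> g ` V"
  shows "c \<le> \<psi> (cf ! (n - k)) \<longleftrightarrow> k \<le> card (upper c)"
proof -
  have "cf ! (n - k) \<in> f ` V"
    using assms by (simp add: sorted_list_of_set_nth_mem[OF finite_values(1)])
  then have "c \<le> \<psi> (cf ! (n - k)) \<longleftrightarrow> cf ! (n - card (upper c)) \<le> cf ! (n - k)"
    using assms(3) by (rule \<psi>_ge_iff)
  also have "\<dots> \<longleftrightarrow> k \<le> card (upper c)"
    using assms card_upper[OF assms(3)]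
    by (subst sorted_list_of_set_nth_le_iff[OF finite_values(1)]) auto
  finally show ?thesis .
qed

definition \<tau> :: "nat \<Rightarrow> nat" where
  "\<tau> k = (if k = 0 then 0 else if k \<le> m then card (lower (cg ! (k - 1)))
    else n + card (upper (cg ! (2 * m - k))))"

lemma cg_mem: "i < m \<Longrightarrow> cg ! i \<in> g ` V"
  by (rule sorted_list_of_set_nth_mem[OF finite_values(2)])

lemma cg_le_iff: "i < m \<Longrightarrow> j < m \<Longrightarrow> cg ! i \<le> cg ! j \<longleftrightarrow> i \<le> j"
  by (rule sorted_list_of_set_nth_le_iff[OF finite_values(2)])

lemma ext_space_coarsening: "ext_space K g k = ext_space K f (\<tau> k)"
proof -
  have crit: "critvals K f = cf" "critvals K g = cg" by (simp_all add: critvals_def)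
  consider "k = 0" | "0 < k" "k \<le> m" | "m < k" by linarith
  then show ?thesis
  proof cases
    case 1
    then show ?thesis by (simp add: \<tau>_def ext_space_def)
  next
    case 2
    define c where "c = cg ! (k - 1)"
    have c: "c \<in> g ` V" using 2 by (simp add: c_def cg_mem)
    have "\<tau> k = card (lower c)" using 2 by (simp add: \<tau>_def c_def)
    moreover have "{\<sigma> \<in> K. \<forall>v\<in>\<sigma>. g v \<le> c} = {\<sigma> \<in> K. \<forall>v\<in>\<sigma>. f v \<le> cf ! (card (lower c) - 1)}"
      using le_iff_lower[OF UnionI c] by auto
    ultimately show ?thesis
      using 2 card_lower[OF c] by (simp add: ext_space_def Let_def crit c_def)
  next
    case 3
    define c where "c = cg ! (2 * m - k)"
    have c: "c \<in> g ` V" using 3 card_values_pos by (simp add: c_def cg_mem)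
    have "\<tau> k = n + card (upper c)" "2 * n - (n + card (upper c)) = n - card (upper c)"
      using 3 by (simp_all add: \<tau>_def c_def)
    moreover have "{\<sigma> \<in> K. \<forall>v\<in>\<sigma>. c \<le> g v} = {\<sigma> \<in> K. \<forall>v\<in>\<sigma>. cf ! (n - card (upper c)) \<le> f v}"
      using ge_iff_upper[OF UnionI c] by auto
    ultimately show ?thesis
      using 3 card_upper[OF c] by (simp add: ext_space_def Let_def crit c_def)
  qed
qed

lemma card_lower_mono: "c \<le> c' \<Longrightarrow> card (lower c) \<le> card (lower c')"
  unfolding lower_def by (rule card_mono) (auto simp: finite_values(1))

lemma card_upper_antimono: "c \<le> c' \<Longrightarrow> card (upper c') \<le> card (upper c)"
  unfolding upper_def by (rule card_mono) (auto simp: finite_values(1))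

lemma lower_last: "lower (cg ! (m - 1)) = f ` V"
  and upper_first: "upper (cg ! 0) = f ` V"
proof -
  have "cg ! 0 \<le> \<psi> x \<and> \<psi> x \<le> cg ! (m - 1)" if x: "x \<in> f ` V" for x
  proof -
    obtain i where "i < m" "cg ! i = \<psi> x"
      using sorted_list_of_set_nth_exists[OF finite_values(2) \<psi>_mem[OF x]] by blast
    then show ?thesis using cg_le_iff[of 0 i] cg_le_iff[of i "m - 1"] by auto
  qed
  then show "lower (cg ! (m - 1)) = f ` V" "upper (cg ! 0) = f ` V"
    by (auto simp: lower_def upper_def)
qed

lemma \<tau>_0: "\<tau> 0 = 0"
  by (simp add: \<tau>_def)

lemma \<tau>_m: "\<tau> m = n"
  using card_values_pos lower_last by (simp add: \<tau>_def)

lemma \<tau>_2m: "\<tau> (2 * m) = 2 * n"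
  using card_values_pos by (simp add: \<tau>_def upper_first)

lemma mono_\<tau>: "mono \<tau>"
proof (rule mono_iff_le_Suc[THEN iffD2], rule allI)
  fix k
  consider "k = 0" | "0 < k" "k < m" | "k = m" | "m < k" by linarith
  then show "\<tau> k \<le> \<tau> (Suc k)"
  proof cases
    case 2
    then have "cg ! (k - 1) \<le> cg ! k" by (simp add: cg_le_iff)
    then show ?thesis using 2 by (simp add: \<tau>_def card_lower_mono)
  next
    case 3
    then show ?thesis using \<tau>_m by (simp add: \<tau>_def)
  next
    case 4
    then have "cg ! (2 * m - Suc k) \<le> cg ! (2 * m - k)"
      using card_values_pos by (simp add: cg_le_iff)
    then show ?thesis using 4 by (simp add: \<tau>_def card_upper_antimono)
  qed (simp add: \<tau>_def)
qed

lemma ext_val_sublevel: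
  assumes K': "1 \<le> K'" "K' \<le> m" and k: "\<tau> (K' - 1) < k" "k \<le> \<tau> K'"
  shows "ext_val K g K' = \<psi> (ext_val K f k)"
proof -
  define c where "c = cg ! (K' - 1)"
  have c: "c \<in> g ` V" using K' by (simp add: c_def cg_mem)
  have k_le: "k \<le> card (lower c)" using K' k by (simp add: \<tau>_def c_def)
  have k_range: "1 \<le> k" "k \<le> n" using k k_le card_lower[OF c] by linarith+
  define y where "y = \<psi> (cf ! (k - 1))"
  have y: "y \<in> g ` V"
    using k_range by (simp add: y_def \<psi>_mem sorted_list_of_set_nth_mem[OF finite_values(1)])
  have "y \<le> cg ! (K' - 1)" using \<psi>_nth_le_iff[OF k_range c] k_le by (simp add: y_def c_def)
  moreover have "cg ! (K' - 1 - 1) < y" if "K' - 1 \<noteq> 0"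
  proof -
    have "\<tau> (K' - 1) = card (lower (cg ! (K' - 1 - 1)))" "K' - 1 - 1 < m"
      using that K' by (simp_all add: \<tau>_def)
    then have "\<not> y \<le> cg ! (K' - 1 - 1)"
      using \<psi>_nth_le_iff[OF k_range cg_mem] k by (simp add: y_def)
    then show ?thesis by simp
  qed
  ultimately have "y = cg ! (K' - 1)"
    using K' by (intro eq_sorted_list_of_set_nth_if_above_pred[OF finite_values(2) y]) auto
  then show ?thesis using K' k_range by (simp add: ext_val_def critvals_def y_def)
qed

lemma ext_val_superlevel:
  assumes K': "m < K'" "K' \<le> 2 * m" and k: "\<tau> (K' - 1) < k" "k \<le> \<tau> K'"
  shows "ext_val K g K' = \<psi> (ext_val K f k)"
proof -
  define j where "j = 2 * m - K'"
  define c where "c = cg ! j"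
  have j: "j < m" using K' by (simp add: j_def)
  have c: "c \<in> g ` V" using j by (simp add: c_def cg_mem)
  have "n \<le> \<tau> (K' - 1)"
    using K' \<tau>_m by (cases "K' - 1 = m") (simp_all add: \<tau>_def)
  moreover have "\<tau> K' = n + card (upper c)" using K' by (simp add: \<tau>_def c_def j_def)
  ultimately have i: "1 \<le> k - n" "k - n \<le> n" "k - n \<le> card (upper c)"
    using k card_upper[OF c] by linarith+
  define y where "y = \<psi> (cf ! (n - (k - n)))"
  have y: "y \<in> g ` V"
    using i by (simp add: y_def \<psi>_mem sorted_list_of_set_nth_mem[OF finite_values(1)])
  have "c \<le> y" using \<psi>_nth_ge_iff[OF i(1,2) c] i(3) by (simp add: y_def)
  moreover have "y < cg ! Suc j" if "Suc j \<noteq> m"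
  proof -
    have "K' - 1 \<noteq> 0" "\<not> K' - 1 \<le> m" "2 * m - (K' - 1) = Suc j"
      using that K' by (auto simp: j_def)
    then have "\<tau> (K' - 1) = n + card (upper (cg ! Suc j))" "Suc j < m"
      using that j by (simp_all add: \<tau>_def)
    then have "\<not> cg ! Suc j \<le> y"
      using \<psi>_nth_ge_iff[OF i(1,2) cg_mem] k by (simp add: y_def)
    then show ?thesis by simp
  qed
  ultimately have "y = cg ! j"
    using j
    by (intro eq_sorted_list_of_set_nth_if_below_succ[OF finite_values(2) y]) (auto simp: c_def)
  moreover have "2 * n - k = n - (k - n)" "\<not> k \<le> n" using i(1) by linarith+
  then have "ext_val K f k = cf ! (n - (k - n))" by (simp add: ext_val_def critvals_def)
  moreover have "ext_val K g K' = cg ! j" using K' by (simp add: ext_val_def critvals_def j_def)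
  ultimately show ?thesis by (simp add: y_def)
qed

theorem EDg_coarsening:
  "EDg K g p = image_mset (map_prod \<psi> \<psi>) (filter_mset (\<lambda>(b, d). \<psi> b \<noteq> \<psi> d) (EDg K f p))"
proof -
  have rank: "ext_rank K g p = (\<lambda>a b. ext_rank K f p (\<tau> a) (\<tau> b))"
    by (simp add: fun_eq_iff ext_rank_def ext_space_coarsening)
  interpret diagram_reindexing "2 * n" "2 * m" "ext_rank K f p" \<tau> "ext_val K f" "ext_val K g" \<psi>
  proof
    fix K' k assume "K' \<in> {1..2 * m}" "k \<in> {\<tau> (K' - 1)<..\<tau> K'}"
    then show "ext_val K g K' = \<psi> (ext_val K f k)"
      using ext_val_sublevel ext_val_superlevel by (cases "K' \<le> m") auto
  qed (use mono_\<tau> \<tau>_0 \<tau>_2m simplicial_complex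
      in \<open>simp_all add: rank_mult_ext_rank_nonneg simplicial_complex_def\<close>)
  show ?thesis
    using rank_diagram_reindex by (simp add: EDg_eq_rank_diagram critvals_def rank)
qed

end

section \<open>Matchings of bounded cost\<close>

definition matching_within ::
  "(real \<times> real) multiset \<Rightarrow> (real \<times> real) multiset \<Rightarrow> ((real \<times> real) \<times> (real \<times> real)) multiset
    \<Rightarrow> real \<Rightarrow> bool" where
  "matching_within D1 D2 M c \<longleftrightarrow> is_partial_matching D1 D2 M \<and>
     (\<forall>q\<in>#M. linf_dist (fst q) (snd q) \<le> c) \<and>
     (\<forall>x\<in>#D1 - image_mset fst M. diag_dist x \<le> c) \<and>
     (\<forall>y\<in>#D2 - image_mset snd M. diag_dist y \<le> c)"

definition diagrams_close :: "(real \<times> real) multiset \<Rightarrow> (real \<times> real) multiset \<Rightarrow> real \<Rightarrow> bool" where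
  "diagrams_close D1 D2 c \<longleftrightarrow> 0 \<le> c \<and> (\<exists>M. matching_within D1 D2 M c)"

lemma matching_cost_le_iff:
  "matching_cost D1 D2 M \<le> c \<longleftrightarrow> 0 \<le> c \<and> (\<forall>q\<in>#M. linf_dist (fst q) (snd q) \<le> c) \<and>
     (\<forall>x\<in>#D1 - image_mset fst M. diag_dist x \<le> c) \<and> (\<forall>y\<in>#D2 - image_mset snd M. diag_dist y \<le> c)"
  unfolding matching_cost_def by (subst Max_le_iff) (auto simp: case_prod_beta)

lemma matching_cost_nonneg: "0 \<le> matching_cost D1 D2 M"
  unfolding matching_cost_def by (rule Max_ge) simp_all

lemma matching_within_iff_cost_le:
  "matching_within D1 D2 M c \<longleftrightarrow> is_partial_matching D1 D2 M \<and> matching_cost D1 D2 M \<le> c"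
  if "0 \<le> c"
  using that unfolding matching_within_def matching_cost_le_iff by simp

lemma bottleneck_le_if_close: assumes "diagrams_close D1 D2 c" shows "bottleneck D1 D2 \<le> c"
proof -
  obtain M where "is_partial_matching D1 D2 M" "matching_cost D1 D2 M \<le> c"
    using assms matching_within_iff_cost_le unfolding diagrams_close_def by blast
  moreover have "bdd_below {matching_cost D1 D2 M | M. is_partial_matching D1 D2 M}"
    using matching_cost_nonneg by (intro bdd_belowI[of _ 0]) auto
  ultimately show ?thesis
    unfolding bottleneck_def by (blast intro: cInf_lower2)
qed

lemma linf_dist_commute: "linf_dist x y = linf_dist y x"
  unfolding linf_dist_def by (simp add: abs_minus_commute)

lemma linf_dist_triangle: "linf_dist x z \<le> linf_dist x y + linf_dist y z"
  unfolding linf_dist_def by (cases x, cases y, cases z) (simp, smt (verit))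

lemma diag_dist_le: "diag_dist x \<le> linf_dist x y + diag_dist y"
  unfolding diag_dist_def linf_dist_def by (cases x, cases y) (simp, smt (verit))

lemma matching_within_swap:
  "matching_within D1 D2 M c \<Longrightarrow> matching_within D2 D1 (image_mset prod.swap M) c"
  unfolding matching_within_def is_partial_matching_def
  by (auto simp: multiset.map_comp comp_def linf_dist_commute)

lemma diagrams_close_sym: "diagrams_close D1 D2 c \<Longrightarrow> diagrams_close D2 D1 c"
  unfolding diagrams_close_def using matching_within_swap by blast

lemma diff_add_mset_eq: "D - add_mset x A = (D - {#x#}) - A"
  by (simp add: multiset_eq_iff)

lemma matching_within_add_mset:
  "matching_within D1 D2 (add_mset (x, y) M) c \<longleftrightarrow> x \<in># D1 \<and> y \<in># D2 \<and> linf_dist x y \<le> c \<and>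
      matching_within (D1 - {#x#}) (D2 - {#y#}) M c"
  unfolding matching_within_def is_partial_matching_def image_mset_add_mset insert_subset_eq_iff
    diff_add_mset_eq[of D1 x "image_mset fst M"] diff_add_mset_eq[of D2 y "image_mset snd M"]
  by simp blast

lemma subset_mset_diff_singleton: "A \<subseteq># D \<Longrightarrow> x \<notin># A \<Longrightarrow> A \<subseteq># D - {#x#}"
  by (auto simp: subseteq_mset_def not_in_iff)

lemma mem_diff_if_not_mem: "y \<notin># A \<Longrightarrow> y \<in># D \<Longrightarrow> y \<in># D - A"
  using count_greater_zero_iff[of D y] by (simp add: in_diff_count not_in_iff)

lemma matching_within_compose_empty:
  assumes "matching_within D1 D2 {#} a" "matching_within D2 D3 M b" "0 \<le> a" "0 \<le> b"
  shows "matching_within D1 D3 {#} (a + b)"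
  unfolding matching_within_def is_partial_matching_def
proof (intro conjI ballI)
  fix x assume "x \<in># D1 - image_mset fst {#}"
  then have "diag_dist x \<le> a" using assms(1) by (simp add: matching_within_def)
  then show "diag_dist x \<le> a + b" using assms(4) by simp
next
  fix z assume z: "z \<in># D3 - image_mset snd {#}"
  show "diag_dist z \<le> a + b"
  proof (cases "z \<in># image_mset snd M")
    case True
    then obtain y where yz: "(y, z) \<in># M" by auto
    then have "y \<in># D2" "linf_dist y z \<le> b"
      using assms(2) mset_subset_eqD[of "image_mset fst M" D2 y]
      by (force simp: matching_within_def is_partial_matching_def)+
    then have "diag_dist y \<le> a" using assms(1) by (simp add: matching_within_def)
    then show ?thesis
      using diag_dist_le[of z y] \<open>linf_dist y z \<le> b\<close> by (simp add: linf_dist_commute)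
  next
    case False
    then have "z \<in># D3 - image_mset snd M" using z by (simp add: mem_diff_if_not_mem)
    then have "diag_dist z \<le> b" using assms(2) by (simp add: matching_within_def)
    then show ?thesis using assms(3) by simp
  qed
qed auto

lemma matching_within_remove_unmatched:
  assumes "matching_within D2 D3 M b" "y \<in># D2" "y \<notin># image_mset fst M"
  shows "diag_dist y \<le> b" "matching_within (D2 - {#y#}) D3 M b"
proof -
  have "y \<in># D2 - image_mset fst M" using assms(2,3) by (simp add: mem_diff_if_not_mem)
  then show "diag_dist y \<le> b" using assms(1) by (simp add: matching_within_def)
  have "image_mset fst M \<subseteq># D2 - {#y#}"
    using subset_mset_diff_singleton[OF _ assms(3)] assms(1)
    by (simp add: matching_within_def is_partial_matching_def)
  moreover have "w \<in># D2 - image_mset fst M" if "w \<in># D2 - {#y#} - image_mset fst M" for w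
    using that by (auto simp: in_diff_count split: if_splits)
  ultimately show "matching_within (D2 - {#y#}) D3 M b"
    using assms(1) by (auto simp: matching_within_def is_partial_matching_def)
qed

lemma matching_within_add_unmatched:
  assumes "matching_within (D1 - {#x#}) D3 M c" "x \<in># D1" "diag_dist x \<le> c"
  shows "matching_within D1 D3 M c"
proof -
  have "image_mset fst M \<subseteq># D1"
    using assms(1) subset_mset.order_trans[OF _ diff_subset_eq_self]
    by (auto simp: matching_within_def is_partial_matching_def)
  moreover have "diag_dist w \<le> c" if "w \<in># D1 - image_mset fst M" for w
  proof (cases "w = x")
    case False
    then have "w \<in># D1 - {#x#} - image_mset fst M" using that by (simp add: in_diff_count)
    then show ?thesis using assms(1) by (simp add: matching_within_def)
  qed (use assms(3) in simp)
  ultimately show ?thesis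
    using assms(1) by (auto simp: matching_within_def is_partial_matching_def)
qed

lemma matching_within_compose:
  "matching_within D1 D2 M1 a \<Longrightarrow> matching_within D2 D3 M2 b \<Longrightarrow> 0 \<le> a \<Longrightarrow> 0 \<le> b \<Longrightarrow>
    \<exists>M. matching_within D1 D3 M (a + b)"
proof (induction M1 arbitrary: D1 D2 M2 D3)
  case empty
  then show ?case using matching_within_compose_empty by blast
next
  case (add q M1)
  obtain x y where q: "q = (x, y)" by (cases q)
  have xy: "x \<in># D1" "y \<in># D2" "linf_dist x y \<le> a" "matching_within (D1 - {#x#}) (D2 - {#y#}) M1 a"
    using add.prems(1) unfolding q matching_within_add_mset by auto
  show ?case
  proof (cases "y \<in># image_mset fst M2")
    case True
    then obtain z where "(y, z) \<in># M2" by auto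
    then have "M2 = add_mset (y, z) (M2 - {#(y, z)#})" by simp
    then have yz: "z \<in># D3" "linf_dist y z \<le> b"
        "matching_within (D2 - {#y#}) (D3 - {#z#}) (M2 - {#(y, z)#}) b"
      using add.prems(2) matching_within_add_mset by metis+
    obtain M where "matching_within (D1 - {#x#}) (D3 - {#z#}) M (a + b)"
      using add.IH[OF xy(4) yz(3) add.prems(3,4)] by blast
    then have "matching_within D1 D3 (add_mset (x, z) M) (a + b)"
      using xy yz linf_dist_triangle[of x z y] by (simp add: matching_within_add_mset)
    then show ?thesis by blast
  next
    case False
    obtain M where M: "matching_within (D1 - {#x#}) D3 M (a + b)"
      using add.IH[OF xy(4) matching_within_remove_unmatched(2)[OF add.prems(2) xy(2) False]
        add.prems(3,4)] by blast
    have "diag_dist x \<le> a + b"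
      using diag_dist_le[of x y] xy(3)
        matching_within_remove_unmatched(1)[OF add.prems(2) xy(2) False] by simp
    then show ?thesis using matching_within_add_unmatched[OF M xy(1)] by blast
  qed
qed

lemma diagrams_close_trans:
  "diagrams_close D1 D2 a \<Longrightarrow> diagrams_close D2 D3 b \<Longrightarrow> diagrams_close D1 D3 (a + b)"
  unfolding diagrams_close_def using matching_within_compose by fastforce

section \<open>Stability of extended persistence diagrams\<close>

context order_coarsening
begin

text \<open>Match every point \<open>(b, d)\<close> of the diagram of \<open>f\<close> with \<open>(\<psi> b, \<psi> d)\<close>; the points sent onto
  the diagonal stay unmatched.\<close>

lemma diagrams_close_EDg:
  assumes c: "\<And>v. v \<in> V \<Longrightarrow> \<bar>f v - g v\<bar> \<le> c"
  shows "diagrams_close (EDg K f p) (EDg K g p) c"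
proof -
  define E where "E = EDg K f p"
  define P where "P = (\<lambda>(b, d). \<psi> b \<noteq> \<psi> d)"
  define M where "M = image_mset (\<lambda>x. (x, map_prod \<psi> \<psi> x)) (filter_mset P E)"
  have "0 \<le> c" using c card_values_pos(1) by (force simp: card_gt_0_iff)
  have \<psi>_close: "\<bar>x - \<psi> x\<bar> \<le> c" if "x \<in> f ` V" for x
    using that by (elim imageE) (simp add: \<psi>_f c)
  have E: "set_mset E \<subseteq> f ` V \<times> f ` V"
    using EDg_subset_critvals[of K f p] finite_values(1) by (simp add: E_def critvals_def)
  have fst_M: "image_mset fst M = filter_mset P E" and snd_M: "image_mset snd M = EDg K g p"
    unfolding M_def EDg_coarsening E_def P_def by (simp_all add: multiset.map_comp comp_def)
  have "matching_within E (EDg K g p) M c"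
    unfolding matching_within_def is_partial_matching_def fst_M snd_M
  proof (intro conjI ballI)
    fix q assume "q \<in># M"
    then obtain b d where bd: "(b, d) \<in># E" "q = ((b, d), (\<psi> b, \<psi> d))" by (auto simp: M_def)
    then have "b \<in> f ` V" "d \<in> f ` V" using E by auto
    then show "linf_dist (fst q) (snd q) \<le> c"
      using bd \<psi>_close[of b] \<psi>_close[of d] by (simp add: linf_dist_def)
  next
    fix w assume "w \<in># E - filter_mset P E"
    then obtain b d where "w = (b, d)" "(b, d) \<in># E" "\<psi> b = \<psi> d"
      by (cases w) (auto simp: in_diff_count P_def split: if_splits)
    moreover have "b \<in> f ` V" "d \<in> f ` V" using E calculation(2) by auto
    ultimately show "diag_dist w \<le> c"
      using \<psi>_close[of b] \<psi>_close[of d] by (auto simp: diag_dist_def)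
  qed auto
  then show ?thesis using \<open>0 \<le> c\<close> by (auto simp: diagrams_close_def E_def)
qed

end

definition straight_homotopy :: "('v \<Rightarrow> real) \<Rightarrow> ('v \<Rightarrow> real) \<Rightarrow> real \<Rightarrow> 'v \<Rightarrow> real" where
  "straight_homotopy f g t v = f v + t * (g v - f v)"

text \<open>The times at which two vertex values of the straight homotopy meet, unless they coincide
  at all times; in between, the order of the vertex values is constant.\<close>

definition crossing_times :: "'v set \<Rightarrow> ('v \<Rightarrow> real) \<Rightarrow> ('v \<Rightarrow> real) \<Rightarrow> real set" where
  "crossing_times V f g = {r. \<exists>u\<in>V. \<exists>v\<in>V. (f u - f v \<noteq> 0 \<or> (g u - g v) - (f u - f v) \<noteq> 0) \<and>
     (f u - f v) + r * ((g u - g v) - (f u - f v)) = 0}"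

lemma finite_crossing_times: assumes "finite V" shows "finite (crossing_times V f g)"
proof (rule finite_subset)
  show "crossing_times V f g \<subseteq> (\<lambda>(u, v). - (f u - f v) / ((g u - g v) - (f u - f v))) ` (V \<times> V)"
  proof
    fix r assume "r \<in> crossing_times V f g"
    then obtain u v where uv: "u \<in> V" "v \<in> V" "(g u - g v) - (f u - f v) \<noteq> 0"
      "(f u - f v) + r * ((g u - g v) - (f u - f v)) = 0"
      unfolding crossing_times_def by force
    then have "r = - (f u - f v) / ((g u - g v) - (f u - f v))" by (simp add: field_simps)
    then show "r \<in> (\<lambda>(u, v). - (f u - f v) / ((g u - g v) - (f u - f v))) ` (V \<times> V)"
      using uv by force
  qed
qed (use assms in simp)

lemma straight_homotopy_0 [simp]: "straight_homotopy f g 0 = f"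
  and straight_homotopy_1 [simp]: "straight_homotopy f g 1 = g"
  by (auto simp: straight_homotopy_def)

lemma straight_homotopy_dist:
  "\<bar>straight_homotopy f g s v - straight_homotopy f g t v\<bar> = \<bar>s - t\<bar> * \<bar>f v - g v\<bar>"
  unfolding straight_homotopy_def by (simp add: algebra_simps flip: abs_mult)

text \<open>If the order of \<open>u\<close> and \<open>v\<close> flipped between \<open>s\<close> and \<open>t\<close>, the affine function
  \<open>r \<mapsto> h r u - h r v\<close> would vanish at some time of the half-open segment from \<open>s\<close> to \<open>t\<close>.\<close>

lemma straight_homotopy_order_preserved:
  assumes no_crossing: "\<And>l. 0 \<le> l \<Longrightarrow> l < 1 \<Longrightarrow> s + l * (t - s) \<notin> crossing_times V f g"
    and "u \<in> V" "v \<in> V" and le: "straight_homotopy f g s u \<le> straight_homotopy f g s v"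
  shows "straight_homotopy f g t u \<le> straight_homotopy f g t v"
proof (rule ccontr)
  assume flipped: "\<not> straight_homotopy f g t u \<le> straight_homotopy f g t v"
  define a b where "a = f u - f v" and "b = (g u - g v) - (f u - f v)"
  have at_s: "a + s * b \<le> 0" and at_t: "0 < a + t * b"
    using le flipped by (simp_all add: straight_homotopy_def a_def b_def algebra_simps)
  define d where "d = (a + t * b) - (a + s * b)"
  define l where "l = - (a + s * b) / d"
  have "0 < d" "- (a + s * b) < d" using at_s at_t by (simp_all add: d_def)
  then have "0 \<le> l" "l < 1" using at_s by (simp_all add: l_def divide_nonneg_pos divide_less_eq)
  moreover have "a + (s + l * (t - s)) * b = (a + s * b) + l * d"
    by (simp add: d_def algebra_simps)
  moreover have "(a + s * b) + l * d = 0"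
    using \<open>0 < d\<close> by (simp add: l_def)
  moreover have "a \<noteq> 0 \<or> b \<noteq> 0" using at_t by auto
  ultimately have "s + l * (t - s) \<in> crossing_times V f g"
    using \<open>u \<in> V\<close> \<open>v \<in> V\<close> unfolding crossing_times_def a_def b_def by auto
  with no_crossing \<open>0 \<le> l\<close> \<open>l < 1\<close> show False by blast
qed

lemma order_coarsening_straight_homotopy:
  assumes "simplicial_complex K" "K \<noteq> {}"
    and no_crossing: "\<And>r. r \<in> crossing_times (\<Union>K) f g \<Longrightarrow> \<not> (s < r \<and> r < t)"
    and m: "s < m" "m < t" and t': "s \<le> t'" "t' \<le> t"
  shows "order_coarsening K (straight_homotopy f g m) (straight_homotopy f g t')"
proof (unfold_locales; (rule assms)?)
  fix u v assume "u \<in> \<Union>K" "v \<in> \<Union>K" "straight_homotopy f g m u \<le> straight_homotopy f g m v"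
  moreover have "m + l * (t' - m) \<notin> crossing_times (\<Union>K) f g" if "0 \<le> l" "l < 1" for l
  proof -
    have "0 < (1 - l) * (m - s)" "0 \<le> l * (t' - s)" "0 < (1 - l) * (t - m)" "0 \<le> l * (t - t')"
      using that m t' by simp_all
    then have "0 < (1 - l) * (m - s) + l * (t' - s)" "0 < (1 - l) * (t - m) + l * (t - t')"
      by linarith+
    then have "s < m + l * (t' - m) \<and> m + l * (t' - m) < t"
      by (simp add: algebra_simps)
    then show ?thesis using no_crossing by blast
  qed
  ultimately show "straight_homotopy f g t' u \<le> straight_homotopy f g t' v"
    by (rule straight_homotopy_order_preserved[rotated])
qed

lemma diagrams_close_straight_homotopy_step:
  assumes sc: "simplicial_complex K" "K \<noteq> {}" and "s < t"
    and no_crossing: "\<And>r. r \<in> crossing_times (\<Union>K) f g \<Longrightarrow> \<not> (s < r \<and> r < t)"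
    and L: "\<And>v. v \<in> \<Union>K \<Longrightarrow> \<bar>f v - g v\<bar> \<le> L"
  shows "diagrams_close (EDg K (straight_homotopy f g s) p) (EDg K (straight_homotopy f g t) p)
    ((t - s) * L)"
proof -
  define m where "m = (s + t) / 2"
  have m: "s < m" "m < t" using \<open>s < t\<close> by (simp_all add: m_def)
  have close: "diagrams_close (EDg K (straight_homotopy f g m) p)
      (EDg K (straight_homotopy f g t') p) (\<bar>t' - m\<bar> * L)" if "s \<le> t'" "t' \<le> t" for t'
  proof (rule order_coarsening.diagrams_close_EDg)
    show "order_coarsening K (straight_homotopy f g m) (straight_homotopy f g t')"
      using order_coarsening_straight_homotopy[OF sc no_crossing m that] .
    fix v assume "v \<in> \<Union>K"
    have "\<bar>straight_homotopy f g m v - straight_homotopy f g t' v\<bar> = \<bar>t' - m\<bar> * \<bar>f v - g v\<bar>"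
      by (simp add: straight_homotopy_dist abs_minus_commute)
    also have "\<dots> \<le> \<bar>t' - m\<bar> * L" using L[OF \<open>v \<in> \<Union>K\<close>] by (simp add: mult_left_mono)
    finally show "\<bar>straight_homotopy f g m v - straight_homotopy f g t' v\<bar> \<le> \<bar>t' - m\<bar> * L" .
  qed
  have "diagrams_close (EDg K (straight_homotopy f g s) p) (EDg K (straight_homotopy f g t) p)
      (\<bar>s - m\<bar> * L + \<bar>t - m\<bar> * L)"
    using diagrams_close_trans[OF diagrams_close_sym[OF close[of s]] close[of t]] \<open>s < t\<close> by simp
  moreover have "\<bar>s - m\<bar> + \<bar>t - m\<bar> = t - s" using m by (simp add: abs_if)
  ultimately show ?thesis by (metis distrib_right)
qed

lemma chain_across_finite_breakpoints:
  fixes R :: "real \<Rightarrow> real \<Rightarrow> bool"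
  assumes "finite B" and trans: "\<And>r s t. R r s \<Longrightarrow> R s t \<Longrightarrow> R r t"
    and step: "\<And>s t. a \<le> s \<Longrightarrow> s < t \<Longrightarrow> (\<And>r. r \<in> B \<Longrightarrow> \<not> (s < r \<and> r < t)) \<Longrightarrow> R s t"
    and "a < b"
  shows "R a b"
proof -
  have "R a t" if "a < t" "card {r \<in> B. a < r \<and> r < t} = N" for N t
    using that
  proof (induction N arbitrary: t rule: less_induct)
    case (less N)
    define A where "A = {r \<in> B. a < r \<and> r < t}"
    show ?case
    proof (cases "A = {}")
      case True
      then show ?thesis using less.prems by (intro step) (auto simp: A_def)
    next
      case False
      define t' where "t' = Max A"
      have "finite A" using \<open>finite B\<close> by (simp add: A_def)
      then have t': "t' \<in> A" "\<And>r. r \<in> A \<Longrightarrow> r \<le> t'" using False by (simp_all add: t'_def)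
      then have "{r \<in> B. a < r \<and> r < t'} \<subset> A" by (auto simp: A_def)
      then have "card {r \<in> B. a < r \<and> r < t'} < N"
        using psubset_card_mono[OF \<open>finite A\<close>] less.prems by (simp add: A_def)
      then have "R a t'" using less.IH t' by (simp add: A_def)
      moreover have "R t' t"
      proof (rule step)
        show "a \<le> t'" "t' < t" using t'(1) by (simp_all add: A_def)
        fix r assume "r \<in> B"
        show "\<not> (t' < r \<and> r < t)"
        proof
          assume "t' < r \<and> r < t"
          moreover have "a < t'" using t'(1) by (simp add: A_def)
          ultimately have "r \<in> A" using \<open>r \<in> B\<close> by (simp add: A_def)
          then show False using t'(2) \<open>t' < r \<and> r < t\<close> by force
        qed
      qed
      ultimately show ?thesis by (rule trans)
    qed
  qed
  then show ?thesis using \<open>a < b\<close> by blast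
qed

theorem bottleneck_EDg_le:
  assumes "simplicial_complex K" "K \<noteq> {}"
  shows "bottleneck (EDg K f p) (EDg K g p) \<le> (SUP v\<in>\<Union>K. \<bar>f v - g v\<bar>)"
proof -
  define L where "L = (SUP v\<in>\<Union>K. \<bar>f v - g v\<bar>)"
  have L: "\<bar>f v - g v\<bar> \<le> L" if "v \<in> \<Union>K" for v
    unfolding L_def using that simplicial_complex_finite_vertices[OF assms(1)]
    by (intro cSUP_upper) auto
  define R where "R s t \<longleftrightarrow> diagrams_close (EDg K (straight_homotopy f g s) p)
    (EDg K (straight_homotopy f g t) p) ((t - s) * L)" for s t
  have "R 0 1"
  proof (rule chain_across_finite_breakpoints)
    show "finite (crossing_times (\<Union>K) f g)"
      using simplicial_complex_finite_vertices[OF assms(1)] by (rule finite_crossing_times)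
    show "R r t" if "R r s" "R s t" for r s t
      using diagrams_close_trans[OF that[unfolded R_def]] by (simp add: R_def algebra_simps)
    show "R s t" if "s < t" "\<And>r. r \<in> crossing_times (\<Union>K) f g \<Longrightarrow> \<not> (s < r \<and> r < t)" for s t
      unfolding R_def using assms that L by (rule diagrams_close_straight_homotopy_step)
  qed simp
  then show ?thesis unfolding R_def L_def by (simp add: bottleneck_le_if_close)
qed

section \<open>Landscapes are 1-Lipschitz in the bottleneck distance\<close>

definition kth_largest :: "real multiset \<Rightarrow> nat \<Rightarrow> real" where
  "kth_largest A k = (let xs = rev (sorted_list_of_multiset A) in
     if 1 \<le> k \<and> k \<le> length xs then xs ! (k - 1) else 0)"

definition tent_values :: "(real \<times> real) multiset \<Rightarrow> real \<Rightarrow> real multiset" where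
  "tent_values D t = image_mset (\<lambda>q. tent q t) (filter_mset (\<lambda>(b, d). b < d) D)"

lemma land_pos_eq_kth_largest: "land_pos D k t = kth_largest (tent_values D t) k"
  unfolding land_pos_def kth_largest_def tent_values_def ..

lemma sorted_list_of_multiset_image_uminus:
  "sorted_list_of_multiset (image_mset uminus A) = rev (map uminus (sorted_list_of_multiset A))"
  for A :: "'a::linordered_idom multiset"
proof -
  let ?ys = "map uminus (sorted_list_of_multiset A)"
  have "sorted_list_of_multiset (image_mset uminus A) = sort ?ys"
    by (metis mset_map mset_sorted_list_of_multiset sorted_list_of_multiset_mset)
  moreover have "sort ?ys = rev ?ys"
    by (rule properties_for_sort) (simp_all add: sorted_wrt_map sorted_wrt_rev)
  ultimately show ?thesis by simp
qed

lemma tent_swap: "d < b \<Longrightarrow> tent (d, b) t = - tent (b, d) t"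
  unfolding tent_def by simp

text \<open>Reflecting a diagram in the diagonal exchanges its two parts and negates the tents.\<close>

lemma land_neg_eq_land_pos_swap: "land_neg D j t = - land_pos (image_mset prod.swap D) j t"
proof -
  define X where "X = image_mset (\<lambda>q. tent q t) (filter_mset (\<lambda>(b, d). d < b) D)"
  have "tent_values (image_mset prod.swap D) t = image_mset uminus X"
    unfolding tent_values_def X_def filter_mset_image_mset multiset.map_comp
    by (auto simp: split_def tent_swap intro!: image_mset_cong)
  then have "rev (sorted_list_of_multiset (tent_values (image_mset prod.swap D) t))
      = map uminus (sorted_list_of_multiset X)"
    by (simp add: sorted_list_of_multiset_image_uminus)
  then show ?thesis
    unfolding land_neg_def land_pos_eq_kth_largest kth_largest_def X_def[symmetric]
    by (auto simp: Let_def)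
qed

lemma sorted_rev_nth_ge_iff:
  fixes xs :: "'a::linorder list"
  assumes "sorted (rev xs)" "1 \<le> k" "k \<le> length xs"
  shows "v \<le> xs ! (k - 1) \<longleftrightarrow> k \<le> card {i. i < length xs \<and> v \<le> xs ! i}" (is "_ \<longleftrightarrow> k \<le> card ?I")
proof
  have desc: "xs ! j \<le> xs ! i" if "i \<le> j" "j < length xs" for i j
    using that sorted_rev_nth_mono[OF assms(1)] by simp
  show "k \<le> card ?I" if v: "v \<le> xs ! (k - 1)"
  proof -
    have "v \<le> xs ! i" if "i < k" for i
      using order_trans[OF v desc[of i "k - 1"]] that assms(2,3) by simp
    then have "{0..<k} \<subseteq> ?I" using assms(3) by auto
    then show ?thesis using card_mono[of ?I "{0..<k}"] by simp
  qed
  show "v \<le> xs ! (k - 1)" if k: "k \<le> card ?I"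
  proof (rule ccontr)
    assume "\<not> v \<le> xs ! (k - 1)"
    then have "i < k - 1" if "i \<in> ?I" for i
      using that desc[of "k - 1" i] by (cases "i < k - 1") auto
    then have "?I \<subseteq> {0..<k - 1}" by auto
    then show False using card_mono[of "{0..<k - 1}" ?I] k assms(2) by simp
  qed
qed

lemma kth_largest_ge_iff:
  assumes "0 < v" "1 \<le> k"
  shows "v \<le> kth_largest A k \<longleftrightarrow> k \<le> size (filter_mset (\<lambda>a. v \<le> a) A)"
proof -
  define xs where "xs = rev (sorted_list_of_multiset A)"
  have A: "A = mset xs" by (simp add: xs_def)
  have "size (filter_mset (\<lambda>a. v \<le> a) A) = length (filter (\<lambda>a. v \<le> a) xs)"
    unfolding A mset_filter[symmetric] size_mset ..
  then have count: "size (filter_mset (\<lambda>a. v \<le> a) A) = card {i. i < length xs \<and> v \<le> xs ! i}"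
    by (simp add: length_filter_conv_card)
  show ?thesis
  proof (cases "k \<le> length xs")
    case True
    then have "kth_largest A k = xs ! (k - 1)"
      using assms by (simp add: kth_largest_def xs_def)
    then show ?thesis
      using sorted_rev_nth_ge_iff[of xs k v] True assms(2) count by (simp add: xs_def)
  next
    case False
    then have "kth_largest A k = 0" by (simp add: kth_largest_def xs_def)
    moreover have "size (filter_mset (\<lambda>a. v \<le> a) A) < k"
      using size_filter_mset_lesseq[of "\<lambda>a. v \<le> a" A] False by (simp add: A)
    ultimately show ?thesis using assms(1) by simp
  qed
qed

lemma kth_largest_nonneg: "(\<And>a. a \<in># A \<Longrightarrow> 0 \<le> a) \<Longrightarrow> 0 \<le> kth_largest A k"
  unfolding kth_largest_def Let_def
  using nth_mem[of "k - 1" "rev (sorted_list_of_multiset A)"] by auto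

lemma kth_largest_shift:
  assumes B: "\<And>a. a \<in># B \<Longrightarrow> 0 \<le> a" and c: "0 \<le> c" and k: "1 \<le> k"
    and count: "\<And>a. c < a \<Longrightarrow>
      size (filter_mset (\<lambda>v. a \<le> v) A) \<le> size (filter_mset (\<lambda>v. a - c \<le> v) B)"
  shows "kth_largest A k - c \<le> kth_largest B k"
proof (cases "kth_largest A k \<le> c")
  case True
  moreover have "0 \<le> kth_largest B k" by (rule kth_largest_nonneg) (rule B)
  ultimately show ?thesis by simp
next
  case False
  define a where "a = kth_largest A k"
  have "0 < a" "c < a" using False c by (simp_all add: a_def)
  then have "k \<le> size (filter_mset (\<lambda>v. a \<le> v) A)"
    using kth_largest_ge_iff[where v = a and A = A and k = k] k by (simp add: a_def)
  also have "\<dots> \<le> size (filter_mset (\<lambda>v. a - c \<le> v) B)" using count \<open>c < a\<close> by simp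
  finally have "a - c \<le> kth_largest B k"
    using kth_largest_ge_iff[where v = "a - c" and A = B and k = k] \<open>c < a\<close> k by simp
  then show ?thesis by (simp add: a_def)
qed

lemma tent_bounds: "fst x < snd x \<Longrightarrow> 0 \<le> tent x t \<and> tent x t \<le> diag_dist x"
  by (cases x) (auto simp: tent_def diag_dist_def max_def min_def)

lemma tent_lipschitz:
  "fst x < snd x \<Longrightarrow> fst y < snd y \<Longrightarrow> \<bar>tent x t - tent y t\<bar> \<le> linf_dist x y"
  by (cases x, cases y) (simp add: tent_def linf_dist_def; smt (verit))

lemma tent_le_linf_dist: "fst x < snd x \<Longrightarrow> \<not> fst y < snd y \<Longrightarrow> tent x t \<le> linf_dist x y"
  by (cases x, cases y) (simp add: tent_def linf_dist_def; smt (verit))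

lemma size_filter_mset_le_via_matching:
  assumes "is_partial_matching D1 D2 M"
    and matched: "\<And>q. q \<in># M \<Longrightarrow> Q1 (fst q) \<Longrightarrow> Q2 (snd q)"
    and unmatched: "\<And>x. x \<in># D1 - image_mset fst M \<Longrightarrow> \<not> Q1 x"
  shows "size (filter_mset Q1 D1) \<le> size (filter_mset Q2 D2)"
proof -
  have sub: "image_mset fst M \<subseteq># D1" "image_mset snd M \<subseteq># D2"
    using assms(1) by (simp_all add: is_partial_matching_def)
  have "filter_mset Q1 (D1 - image_mset fst M) = {#}"
    using unmatched by (subst filter_mset_eq_mempty_iff) blast
  then have "filter_mset Q1 D1 = filter_mset Q1 (image_mset fst M)"
    by (metis add.right_neutral filter_union_mset subset_mset.add_diff_inverse sub(1))
  then have "size (filter_mset Q1 D1) = size (filter_mset (\<lambda>q. Q1 (fst q)) M)"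
    by (simp add: filter_mset_image_mset)
  also have "\<dots> \<le> size (filter_mset (\<lambda>q. Q2 (snd q)) M)"
    using matched by (intro size_mset_mono filter_mset_mono_strong) auto
  also have "\<dots> = size (filter_mset Q2 (image_mset snd M))"
    by (simp add: filter_mset_image_mset)
  also have "\<dots> \<le> size (filter_mset Q2 D2)"
    using sub(2) by (intro size_mset_mono multiset_filter_mono)
  finally show ?thesis .
qed

lemma size_filter_tent_values:
  "size (filter_mset P (tent_values D t)) = size (filter_mset (\<lambda>q. fst q < snd q \<and> P (tent q t)) D)"
  unfolding tent_values_def filter_mset_image_mset filter_filter_mset by (simp add: case_prod_beta)

lemma tent_values_count_le:
  assumes M: "matching_within D1 D2 M c" and "c < a"
  shows "size (filter_mset (\<lambda>v. a \<le> v) (tent_values D1 t))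
    \<le> size (filter_mset (\<lambda>v. a - c \<le> v) (tent_values D2 t))"
  unfolding size_filter_tent_values
proof (rule size_filter_mset_le_via_matching)
  show "is_partial_matching D1 D2 M" using M by (simp add: matching_within_def)
next
  fix q assume q: "q \<in># M" "fst (fst q) < snd (fst q) \<and> a \<le> tent (fst q) t"
  have "linf_dist (fst q) (snd q) \<le> c" using M q(1) by (simp add: matching_within_def)
  then show "fst (snd q) < snd (snd q) \<and> a - c \<le> tent (snd q) t"
    using q(2) \<open>c < a\<close> tent_lipschitz[of "fst q" "snd q" t] tent_le_linf_dist[of "fst q" "snd q" t]
    by (cases "fst (snd q) < snd (snd q)") (auto simp: abs_le_iff)
next
  fix x assume "x \<in># D1 - image_mset fst M"
  then have "diag_dist x \<le> c" using M by (simp add: matching_within_def)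
  then show "\<not> (fst x < snd x \<and> a \<le> tent x t)" using tent_bounds[of x t] \<open>c < a\<close> by auto
qed

lemma tent_values_nonneg: "a \<in># tent_values D t \<Longrightarrow> 0 \<le> a"
  unfolding tent_values_def using tent_bounds by (auto simp: case_prod_beta)

lemma land_pos_diff_le:
  assumes "matching_within D1 D2 M c" "0 \<le> c" "1 \<le> k"
  shows "\<bar>land_pos D1 k t - land_pos D2 k t\<bar> \<le> c"
proof -
  have "kth_largest (tent_values D1 t) k - c \<le> kth_largest (tent_values D2 t) k"
    by (rule kth_largest_shift)
      (use tent_values_nonneg tent_values_count_le[OF assms(1)] assms(2,3) in auto)
  moreover have "kth_largest (tent_values D2 t) k - c \<le> kth_largest (tent_values D1 t) k"
    by (rule kth_largest_shift)
      (use tent_values_nonneg tent_values_count_le[OF matching_within_swap[OF assms(1)]] assms(2,3)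
        in auto)
  ultimately show ?thesis unfolding land_pos_eq_kth_largest by linarith
qed

lemma matching_within_reflect:
  assumes "matching_within D1 D2 M c"
  shows "matching_within (image_mset prod.swap D1) (image_mset prod.swap D2)
    (image_mset (map_prod prod.swap prod.swap) M) c"
proof -
  let ?r = "prod.swap :: real \<times> real \<Rightarrow> real \<times> real"
  have sub: "image_mset fst M \<subseteq># D1" "image_mset snd M \<subseteq># D2"
    using assms by (simp_all add: matching_within_def is_partial_matching_def)
  have fst_snd: "image_mset fst (image_mset (map_prod ?r ?r) M) = image_mset ?r (image_mset fst M)"
    "image_mset snd (image_mset (map_prod ?r ?r) M) = image_mset ?r (image_mset snd M)"
    by (simp_all add: multiset.map_comp comp_def)
  have diff: "image_mset ?r D1 - image_mset ?r (image_mset fst M) = image_mset ?r (D1 - image_mset fst M)"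
    "image_mset ?r D2 - image_mset ?r (image_mset snd M) = image_mset ?r (D2 - image_mset snd M)"
    by (simp_all add: image_mset_Diff[OF sub(1)] image_mset_Diff[OF sub(2)])
  have swap: "linf_dist (?r x) (?r y) = linf_dist x y" "diag_dist (?r x) = diag_dist x" for x y
    by (simp_all add: linf_dist_def diag_dist_def max.commute abs_minus_commute)
  show ?thesis
    using assms sub
    unfolding matching_within_def is_partial_matching_def fst_snd diff
    by (auto simp: image_mset_subseteq_mono swap)
qed

lemma land_neg_diff_le:
  assumes "matching_within D1 D2 M c" "0 \<le> c" "1 \<le> k"
  shows "\<bar>land_neg D1 k t - land_neg D2 k t\<bar> \<le> c"
  using land_pos_diff_le[OF matching_within_reflect[OF assms(1)] assms(2,3)]
  by (simp add: land_neg_eq_land_pos_swap abs_minus_commute)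

theorem landscape_dist_inf_le_bottleneck: "landscape_dist_inf D1 D2 \<le> bottleneck D1 D2"
  unfolding bottleneck_def
proof (rule cInf_greatest)
  have "is_partial_matching D1 D2 {#}" by (simp add: is_partial_matching_def)
  then show "{matching_cost D1 D2 M | M. is_partial_matching D1 D2 M} \<noteq> {}" by blast
next
  fix c assume "c \<in> {matching_cost D1 D2 M | M. is_partial_matching D1 D2 M}"
  then obtain M where "matching_within D1 D2 M c" "0 \<le> c"
    using matching_within_iff_cost_le matching_cost_nonneg by fastforce
  then show "landscape_dist_inf D1 D2 \<le> c"
    unfolding landscape_dist_inf_def
    by (intro cSup_least) (auto intro: land_pos_diff_le land_neg_diff_le)
qed

theorem proposition0p3:
  fixes K :: "'v set set" and f g :: "'v \<Rightarrow> real" and p :: nat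
  assumes "simplicial_complex K" and "K \<noteq> {}"
  shows "landscape_dist_inf (EDg K f p) (EDg K g p) \<le> bottleneck (EDg K f p) (EDg K g p)
       \<and> bottleneck (EDg K f p) (EDg K g p) \<le> (SUP v\<in>\<Union>K. \<bar>f v - g v\<bar>)"
  using landscape_dist_inf_le_bottleneck bottleneck_EDg_le[OF assms] by blast

end
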